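(* Let $d\geq 2$ and let $n_1\geq n_2\geq\cdots\geq n_d\geq 2$ be integers. Then $\textsc{Grid}(n_1,\ldots,n_d)$ is $Q_d$-supermagic.
   Context: For integers $k\le\ell$, $[k]=\{1,\ldots,k\}$. The grid graph $\textsc{Grid}(n_1,\ldots,n_d)$ has vertex set $V=[n_1]\times\cdots\times[n_d]$ and edge set $E=\{\{\mathbf x,\mathbf y\}: \mathbf x,\mathbf y\in V,\ \sum_{i=1}^d|x_i-y_i|=1\}$. The $d$-cube $Q_d$ is $\textsc{Grid}(2,\ldots,2)$ ($d$ entries). A graph $G$ admits an $H$-covering if every edge of $G$ lies in at least one subgraph of $G$ isomorphic to $H$. A graph $G=(V,E)$ admitting an $H$-covering is $H$-magic if there is a bijection $F:V\cup E\to\{1,\ldots,|V|+|E|\}$ and a constant $c$ such that $\sum_{v\in V(H')}F(v)+\sum_{e\in E(H')}F(e)=c$ for every subgraph $H'\subseteq G$ isomorphic to $H$; it is $H$-supermagic if moreover such an $F$ can be chosen with $F(V)=\{1,\ldots,|V|\}$. *)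

theory Defs
  imports Main
begin

text \<open>A (simple) graph is a pair (V, E) of a vertex set and a set of 2-element edges.\<close>
type_synonym 'a graph = "'a set \<times> 'a set set"

definition verts :: "'a graph \<Rightarrow> 'a set" where "verts G = fst G"
definition edges :: "'a graph \<Rightarrow> 'a set set" where "edges G = snd G"

definition grid_verts :: "nat list \<Rightarrow> nat list set" where
  "grid_verts ns = {x. length x = length ns \<and> (\<forall>i<length ns. 1 \<le> x ! i \<and> x ! i \<le> ns ! i)}"

definition grid_edges :: "nat list \<Rightarrow> nat list set set" where
  "grid_edges ns = {{x, y} | x y. x \<in> grid_verts ns \<and> y \<in> grid_verts ns \<and>
      (\<Sum>i<length ns. nat \<bar>int (x ! i) - int (y ! i)\<bar>) = 1}"

definition grid :: "nat list \<Rightarrow> nat list graph" where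
  "grid ns = (grid_verts ns, grid_edges ns)"

definition cube :: "nat \<Rightarrow> nat list graph" where
  "cube d = grid (replicate d 2)"

definition subgraph :: "'a graph \<Rightarrow> 'a graph \<Rightarrow> bool" where
  "subgraph S G \<longleftrightarrow> verts S \<subseteq> verts G \<and> edges S \<subseteq> edges G \<and> (\<forall>e\<in>edges S. e \<subseteq> verts S)"

definition graph_iso :: "'a graph \<Rightarrow> 'b graph \<Rightarrow> bool" where
  "graph_iso G H \<longleftrightarrow> (\<exists>f. bij_betw f (verts G) (verts H) \<and> (\<lambda>e. f ` e) ` edges G = edges H)"

definition copies :: "'a graph \<Rightarrow> 'b graph \<Rightarrow> 'a graph set" where
  "copies G H = {S. subgraph S G \<and> graph_iso S H}"

definition H_covering :: "'a graph \<Rightarrow> 'b graph \<Rightarrow> bool" where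
  "H_covering G H \<longleftrightarrow> (\<forall>e\<in>edges G. \<exists>S\<in>copies G H. e \<in> edges S)"

definition magic_labelling :: "'a graph \<Rightarrow> 'b graph \<Rightarrow> ('a + 'a set \<Rightarrow> nat) \<Rightarrow> bool" where
  "magic_labelling G H F \<longleftrightarrow>
     bij_betw F (Inl ` verts G \<union> Inr ` edges G) {1..card (verts G) + card (edges G)} \<and>
     (\<exists>c. \<forall>S\<in>copies G H. (\<Sum>v\<in>verts S. F (Inl v)) + (\<Sum>e\<in>edges S. F (Inr e)) = c)"

definition H_magic :: "'a graph \<Rightarrow> 'b graph \<Rightarrow> bool" where
  "H_magic G H \<longleftrightarrow> H_covering G H \<and> (\<exists>F. magic_labelling G H F)"

definition H_supermagic :: "'a graph \<Rightarrow> 'b graph \<Rightarrow> bool" where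
  "H_supermagic G H \<longleftrightarrow> H_covering G H \<and>
     (\<exists>F. magic_labelling G H F \<and> F ` Inl ` verts G = {1..card (verts G)})"

end

theory Submission
  imports Defs
begin

text \<open>Every subgraph of the grid isomorphic to \<open>Q_d\<close> is a unit cube, because an injective
  adjacency-preserving map of \<open>Q_d\<close> into the lattice has a unit cube as image. So it suffices to
  number the vertices \<open>1, \<dots>, |V|\<close> and the edges \<open>|V| + 1, \<dots>, |V| + |E|\<close> such that all unit
  cubes get the same total.

  For the vertices, view the grid as a rectangle whose columns are the values of a coordinate \<open>j\<close>
  and whose rows enumerate the remaining coordinates with a second coordinate \<open>k\<close> as least
  significant digit. A signed numbering \<open>(-1)^(c+r) (B r + 2 c)\<close> of the cells by the odd (or the
  even) integers of absolute value below the number of cells sums to zero over every set of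
  vertices closed under unit moves along \<open>j\<close> and along \<open>k\<close>, in particular over every unit cube;
  shifting it to \<open>1, \<dots>, |V|\<close> gives constant cube sums.

  For \<open>d \<ge> 3\<close>, the edges in direction \<open>i\<close> are the vertices of the grid shortened by one in
  direction \<open>i\<close>, and those of a unit cube form a face that is again closed under unit moves along
  two further directions, so the same vertex numbering, placed in the \<open>i\<close>-th block of edge labels,
  works. For \<open>d = 2\<close> an explicit numbering of the edges layer by layer is used.\<close>

section \<open>Grids\<close>

lemma grid_verts_length: "x \<in> grid_verts m \<Longrightarrow> length x = length m"
  by (simp add: grid_verts_def)

lemma grid_verts_nth: "x \<in> grid_verts m \<Longrightarrow> i < length m \<Longrightarrow> 1 \<le> x ! i \<and> x ! i \<le> m ! i"
  by (simp add: grid_verts_def)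

lemma grid_vertsI:
  "length x = length m \<Longrightarrow> (\<And>i. i < length m \<Longrightarrow> 1 \<le> x ! i \<and> x ! i \<le> m ! i) \<Longrightarrow> x \<in> grid_verts m"
  by (simp add: grid_verts_def)

lemma grid_verts_Nil: "grid_verts [] = {[]}"
  by (auto simp: grid_verts_def)

lemma grid_verts_Cons: "grid_verts (n # m) = (\<lambda>(c, x). c # x) ` ({1..n} \<times> grid_verts m)"
proof (intro equalityI subsetI)
  fix y assume y: "y \<in> grid_verts (n # m)"
  then obtain c x where "y = c # x" by (cases y) (auto simp: grid_verts_def)
  moreover have "c \<in> {1..n}" using grid_verts_nth[OF y, of 0] \<open>y = c # x\<close> by simp
  moreover have "x \<in> grid_verts m"
  proof (rule grid_vertsI)
    show "length x = length m" using grid_verts_length[OF y] \<open>y = c # x\<close> by simp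
    show "1 \<le> x ! i \<and> x ! i \<le> m ! i" if "i < length m" for i
      using grid_verts_nth[OF y, of "Suc i"] that \<open>y = c # x\<close> by simp
  qed
  ultimately show "y \<in> (\<lambda>(c, x). c # x) ` ({1..n} \<times> grid_verts m)" by blast
qed (auto simp: grid_verts_def nth_Cons split: nat.split)

lemma finite_grid_verts: "finite (grid_verts m)"
  by (induction m) (simp_all add: grid_verts_Nil grid_verts_Cons)

lemma card_grid_verts: "card (grid_verts m) = prod_list m"
proof (induction m)
  case (Cons n m)
  have "inj_on (\<lambda>(c, x). c # x) ({1..n} \<times> grid_verts m)"
    by (auto simp: inj_on_def)
  with Cons show ?case
    by (simp add: grid_verts_Cons card_image card_cartesian_product)
qed (simp add: grid_verts_Nil)

lemma prod_list_update_one: "j < length (m::nat list) \<Longrightarrow> prod_list m = m ! j * prod_list (m[j := 1])"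
proof (induction m arbitrary: j)
  case (Cons n m)
  show ?case
  proof (cases j)
    case (Suc i)
    with Cons.prems have "prod_list m = m ! i * prod_list (m[i := 1])" by (intro Cons.IH) simp
    with Suc show ?thesis by (simp add: algebra_simps)
  qed simp
qed simp

definition adjacent :: "nat \<Rightarrow> nat list \<Rightarrow> nat list \<Rightarrow> bool" where
  "adjacent d x y \<longleftrightarrow>
     (\<exists>i<d. (\<forall>j<d. j \<noteq> i \<longrightarrow> x ! j = y ! j) \<and> (x ! i = Suc (y ! i) \<or> y ! i = Suc (x ! i)))"

lemma adjacent_sym: "adjacent d x y \<Longrightarrow> adjacent d y x"
  unfolding adjacent_def by metis

lemma grid_dist_eq_1_iff_adjacent:
  assumes "length x = d" "length y = d"
  shows "(\<Sum>i<d. nat \<bar>int (x ! i) - int (y ! i)\<bar>) = 1 \<longleftrightarrow> adjacent d x y"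
proof -
  have one: "nat \<bar>int a - int b\<bar> = Suc 0 \<longleftrightarrow> a = Suc b \<or> b = Suc a" for a b :: nat by arith
  have zero: "nat \<bar>int a - int b\<bar> = 0 \<longleftrightarrow> a = b" for a b :: nat by arith
  have "(\<Sum>i<d. nat \<bar>int (x ! i) - int (y ! i)\<bar>) = Suc 0 \<longleftrightarrow>
      (\<exists>i\<in>{..<d}. nat \<bar>int (x ! i) - int (y ! i)\<bar> = Suc 0 \<and>
        (\<forall>j\<in>{..<d}. i \<noteq> j \<longrightarrow> nat \<bar>int (x ! j) - int (y ! j)\<bar> = 0))"
    by (rule sum_eq_Suc0_iff) simp
  also have "\<dots> \<longleftrightarrow> adjacent d x y"
    unfolding adjacent_def one zero by auto
  finally show ?thesis by simp
qed

lemma doubleton_in_grid_edges_iff: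
  assumes "x \<in> grid_verts ns" "y \<in> grid_verts ns"
  shows "{x, y} \<in> grid_edges ns \<longleftrightarrow> adjacent (length ns) x y"
proof
  assume "{x, y} \<in> grid_edges ns"
  then obtain x' y' where e: "{x, y} = {x', y'}" "x' \<in> grid_verts ns" "y' \<in> grid_verts ns"
    "(\<Sum>i<length ns. nat \<bar>int (x' ! i) - int (y' ! i)\<bar>) = 1"
    unfolding grid_edges_def by blast
  then have "adjacent (length ns) x' y'"
    using grid_dist_eq_1_iff_adjacent grid_verts_length by blast
  with e(1) show "adjacent (length ns) x y"
    by (metis doubleton_eq_iff adjacent_sym)
next
  assume "adjacent (length ns) x y"
  with assms show "{x, y} \<in> grid_edges ns"
    unfolding grid_edges_def using grid_dist_eq_1_iff_adjacent grid_verts_length by blast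
qed

lemma grid_edgesE:
  assumes "e \<in> grid_edges ns"
  obtains x y where "e = {x, y}" "x \<in> grid_verts ns" "y \<in> grid_verts ns" "adjacent (length ns) x y"
  using assms grid_dist_eq_1_iff_adjacent grid_verts_length unfolding grid_edges_def by blast

section \<open>Signed labellings of rectangles\<close>

lemma bij_betw_if_inj_on_card:
  assumes "inj_on f A" "f ` A \<subseteq> B" "card A = card B" "finite B"
  shows "bij_betw f A B"
  by (metis assms bij_betw_def card_image card_subset_eq)

lemma sum_eq_0_if_negated_by_bij:
  fixes f :: "'a \<Rightarrow> int"
  assumes "bij_betw s C C" "\<And>y. y \<in> C \<Longrightarrow> f (s y) = - f y"
  shows "sum f C = 0"
proof -
  have "sum f C = (\<Sum>y\<in>C. f (s y))"
    by (rule sum.reindex_bij_betw[OF assms(1), symmetric])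
  also have "\<dots> = - sum f C"
    using assms(2) by (simp add: sum_negf)
  finally show ?thesis by simp
qed

lemma minus_one_power_odd_sum: "odd (a + b) \<Longrightarrow> (-1 :: int) ^ a = - ((-1) ^ b)"
  by (auto simp: minus_one_power_iff)

lemma odd_plus_Suc: "a = Suc b \<or> Suc a = b \<Longrightarrow> odd (a + b)"
  by auto

lemma alternating_sum_eq_0:
  fixes c r :: "'a \<Rightarrow> nat" and B G :: "nat \<Rightarrow> int"
  assumes s: "bij_betw s C C" "\<And>y. y \<in> C \<Longrightarrow> odd (c (s y) + c y) \<and> r (s y) = r y"
    and t: "bij_betw t C C" "\<And>y. y \<in> C \<Longrightarrow> c (t y) = c y \<and> odd (r (t y) + r y)"
  shows "(\<Sum>y\<in>C. (-1) ^ (c y + r y) * (B (r y) + G (c y))) = 0"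
proof -
  have "(\<Sum>y\<in>C. (-1) ^ (c y + r y) * B (r y)) = 0"
  proof (rule sum_eq_0_if_negated_by_bij[OF s(1)])
    fix y assume "y \<in> C"
    with s(2) have "odd (c (s y) + r (s y) + (c y + r y))" and r: "r (s y) = r y"
      by (auto simp: even_add)
    then have "(-1) ^ (c (s y) + r (s y)) = - ((-1) ^ (c y + r y) :: int)"
      by (intro minus_one_power_odd_sum) simp
    with r show "(-1) ^ (c (s y) + r (s y)) * B (r (s y)) = - ((-1) ^ (c y + r y) * B (r y))"
      by simp
  qed
  moreover have "(\<Sum>y\<in>C. (-1) ^ (c y + r y) * G (c y)) = 0"
  proof (rule sum_eq_0_if_negated_by_bij[OF t(1)])
    fix y assume "y \<in> C"
    with t(2) have "odd (c (t y) + r (t y) + (c y + r y))" and c: "c (t y) = c y"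
      by (auto simp: even_add)
    then have "(-1) ^ (c (t y) + r (t y)) = - ((-1) ^ (c y + r y) :: int)"
      by (intro minus_one_power_odd_sum) simp
    with c show "(-1) ^ (c (t y) + r (t y)) * G (c (t y)) = - ((-1) ^ (c y + r y) * G (c y))"
      by simp
  qed
  ultimately show ?thesis
    by (simp add: distrib_left sum.distrib)
qed

lemma mult_add_digit_inject:
  fixes n q q' c c' :: nat
  assumes "c \<in> {1..n}" "c' \<in> {1..n}" "n * q + c = n * q' + c'"
  shows "q = q' \<and> c = c'"
proof -
  define e e' where "e = c - 1" "e' = c' - 1"
  then have e: "c = Suc e" "e < n" and e': "c' = Suc e'" "e' < n"
    using assms(1,2) by auto
  then have "n * q + e = n * q' + e'" using assms(3) by simp
  then have "(n * q + e) div n = (n * q' + e') div n" "(n * q + e) mod n = (n * q' + e') mod n"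
    by simp_all
  then show ?thesis using e e' by simp
qed

definition row_block :: "nat \<Rightarrow> nat \<Rightarrow> nat" where
  "row_block N r = (if even N then r div 2 else (r + 1) div 2)"

lemma row_block_parity_inject: "row_block N r = row_block N r' \<Longrightarrow> even r = even r' \<Longrightarrow> r = r'"
  by (simp add: row_block_def split: if_splits) presburger+

definition rect_base :: "nat \<Rightarrow> nat \<Rightarrow> nat \<Rightarrow> nat \<Rightarrow> int" where
  "rect_base n N c r = 2 * int (n * row_block N r + c) - (if even N then 1 else int n + 1)"

text \<open>The value is \<open>(-1)^(c+r) (B r + 2 c)\<close>, so the terms with \<open>B\<close> cancel between cells in
  adjacent columns and those with \<open>2 c\<close> between cells in adjacent rows. Up to sign the values are
  \<open>2 X - 1\<close> (\<open>N\<close> even) or \<open>2 X - n - 1\<close> (\<open>n, N\<close> odd) for the position \<open>X\<close> of the cell in a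
  numbering of pairs of rows, the first row standing alone for odd \<open>N\<close>; this makes them
  exactly the integers of the parity of \<open>n N + 1\<close> in \<open>[1 - n N, n N - 1]\<close>.\<close>
definition rect_value :: "nat \<Rightarrow> nat \<Rightarrow> nat \<Rightarrow> nat \<Rightarrow> int" where
  "rect_value n N c r = (-1) ^ (c + r) * rect_base n N c r"

definition rect_label :: "nat \<Rightarrow> nat \<Rightarrow> nat \<times> nat \<Rightarrow> nat" where
  "rect_label n N = (\<lambda>(c, r). nat ((rect_value n N c r + int (n * N) + 1) div 2))"

lemma abs_rect_value: "\<bar>rect_value n N c r\<bar> = \<bar>rect_base n N c r\<bar>"
  by (simp add: rect_value_def abs_mult)

lemma rect_base_bounds:
  assumes "c \<in> {1..n}" "r < N" "odd n \<or> even N"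
  shows "even (rect_base n N c r + int (n * N) + 1) \<and> \<bar>rect_base n N c r\<bar> \<le> int (n * N) - 1"
proof -
  define X where "X = n * row_block N r + c"
  have X1: "1 \<le> X" using assms(1) by (simp add: X_def)
  show ?thesis
  proof (cases "even N")
    case True
    then obtain k where k: "N = 2 * k" by blast
    have "row_block N r + 1 \<le> k" using True k assms(2) by (simp add: row_block_def)
    then have "n * (row_block N r + 1) \<le> n * k" by (rule mult_le_mono2)
    then have "X \<le> n * k" using assms(1) by (simp add: X_def)
    then have "2 * X \<le> n * N" using k by simp
    then have "2 * int X \<le> int (n * N)" by linarith
    moreover have "even (int (n * N))" using k by simp
    ultimately show ?thesis using True X1 by (simp add: rect_base_def X_def[symmetric] even_add)
  next
    case False
    then have "odd n" using assms(3) by simp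
    obtain k where k: "N = 2 * k + 1" using False oddE by blast
    have "row_block N r \<le> k" using False k assms(2) by (simp add: row_block_def)
    then have "n * row_block N r \<le> n * k" by (rule mult_le_mono2)
    moreover have "c \<le> n" using assms(1) by simp
    ultimately have "X \<le> n * k + n" unfolding X_def by linarith
    then have "2 * X \<le> n * N + n" using k by (simp add: algebra_simps)
    then have "2 * int X \<le> int (n * N) + int n" by linarith
    moreover have "n \<le> n * N" using k by simp
    then have "int n \<le> int (n * N)" by linarith
    moreover have "odd (int (n * N))" "odd (int n)"
      using k \<open>odd n\<close> by simp_all
    ultimately show ?thesis using False X1 by (simp add: rect_base_def X_def[symmetric] even_add)
  qed
qed

lemma rect_value_bounds:
  assumes "c \<in> {1..n}" "r < N" "odd n \<or> even N"
  shows "even (rect_value n N c r + int (n * N) + 1) \<and> \<bar>rect_value n N c r\<bar> \<le> int (n * N) - 1"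
proof -
  have "rect_value n N c r = rect_base n N c r \<or> rect_value n N c r = - rect_base n N c r"
    by (simp add: rect_value_def minus_one_power_iff)
  then show ?thesis using rect_base_bounds[OF assms] by (auto simp: even_add)
qed

lemma two_rect_label:
  assumes "c \<in> {1..n}" "r < N" "odd n \<or> even N"
  shows "2 * int (rect_label n N (c, r)) = rect_value n N c r + int (n * N) + 1"
proof -
  define a where "a = rect_value n N c r + int (n * N) + 1"
  have "even a" "2 \<le> a" using rect_value_bounds[OF assms] by (auto simp: a_def)
  then have "2 * int (nat (a div 2)) = a" by auto
  then show ?thesis by (simp add: rect_label_def a_def)
qed

lemma rect_base_gt: "odd N \<Longrightarrow> 0 < r \<Longrightarrow> 1 \<le> c \<Longrightarrow> int n + 1 \<le> rect_base n N c r"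
proof -
  assume "odd N" "0 < r" "1 \<le> c"
  then have "1 \<le> row_block N r" by (simp add: row_block_def)
  then have "int n * 1 \<le> int n * int (row_block N r)" by (intro mult_left_mono) auto
  then show ?thesis using \<open>odd N\<close> \<open>1 \<le> c\<close> by (simp add: rect_base_def)
qed

lemma rect_base_pos:
  assumes "even N \<or> 0 < r" "1 \<le> c"
  shows "0 < rect_base n N c r"
proof (cases "even N")
  case True
  have "int 1 \<le> int (n * row_block N r + c)" using assms(2) by (simp only: of_nat_le_iff)
  then show ?thesis using True by (simp add: rect_base_def)
next
  case False
  then show ?thesis using assms rect_base_gt[of N r c n] by simp
qed

lemma abs_rect_base_first_row: "odd N \<Longrightarrow> c \<in> {1..n} \<Longrightarrow> \<bar>rect_base n N c 0\<bar> \<le> int n - 1"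
  by (simp add: rect_base_def row_block_def abs_less_iff)

lemma rect_value_inject_pos:
  assumes c: "c \<in> {1..n}" "c' \<in> {1..n}"
    and pos: "0 < rect_base n N c r" "0 < rect_base n N c' r'"
    and eq: "rect_value n N c r = rect_value n N c' r'"
  shows "c = c' \<and> r = r'"
proof -
  have "rect_base n N c r = rect_base n N c' r'"
    using abs_rect_value[of n N] eq pos by (metis abs_of_pos)
  then have "int (n * row_block N r + c) = int (n * row_block N r' + c')"
    unfolding rect_base_def by (smt (verit))
  then have "n * row_block N r + c = n * row_block N r' + c'" by (simp only: of_nat_eq_iff)
  with c have blocks: "row_block N r = row_block N r'" and "c = c'"
    using mult_add_digit_inject by blast+
  have "(-1 :: int) ^ (c + r) = (-1) ^ (c' + r')"
    using eq pos \<open>rect_base n N c r = rect_base n N c' r'\<close> by (simp add: rect_value_def)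
  then have "even r = even r'" using \<open>c = c'\<close> by (auto simp: minus_one_power_iff split: if_splits)
  with blocks \<open>c = c'\<close> show ?thesis using row_block_parity_inject by blast
qed

lemma rect_value_inject_first_row:
  assumes "odd n" "odd N" "rect_value n N c 0 = rect_value n N c' 0"
  shows "c = c'"
proof -
  have eq: "(-1) ^ c * (2 * int c - (int n + 1)) = (-1) ^ c' * (2 * int c' - (int n + 1))"
    using assms by (simp add: rect_value_def rect_base_def row_block_def)
  show ?thesis
  proof (cases "even c = even c'")
    case True
    then have "(-1 :: int) ^ c = (-1) ^ c'" by (simp add: minus_one_power_iff)
    with eq show ?thesis by simp
  next
    case False
    then have "(-1 :: int) ^ c' = - ((-1) ^ c)" by (auto simp: minus_one_power_iff)
    with eq have "(-1) ^ c * ((2 * int c - (int n + 1)) + (2 * int c' - (int n + 1))) = 0"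
      by (simp add: algebra_simps)
    then have "int c + int c' = int n + 1" by simp
    then have "c + c' = n + 1" by linarith
    with False \<open>odd n\<close> show ?thesis by presburger
  qed
qed

lemma inj_on_rect_value:
  assumes par: "odd n \<or> even N"
  shows "inj_on (\<lambda>(c, r). rect_value n N c r) ({1..n} \<times> {0..<N})"
proof (rule inj_onI, clarify)
  fix c r c' r' assume c: "c \<in> {1..n}" "c' \<in> {1..n}"
    and eq: "rect_value n N c r = rect_value n N c' r'"
  show "c = c' \<and> r = r'"
  proof (cases "even N \<or> (0 < r \<and> 0 < r')")
    case True
    then show ?thesis using rect_value_inject_pos[OF c _ _ eq] rect_base_pos c by auto
  next
    case False
    then have "odd N" using par by simp
    have "\<not> (r = 0 \<and> 0 < r')" "\<not> (0 < r \<and> r' = 0)"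
      using rect_base_gt[OF \<open>odd N\<close>] abs_rect_base_first_row[OF \<open>odd N\<close>] abs_rect_value[of n N] eq c
      by (smt (verit) atLeastAtMost_iff)+
    with False have "r = 0" "r' = 0" by auto
    then show ?thesis
      using rect_value_inject_first_row[of n N c c'] eq par \<open>odd N\<close> by simp
  qed
qed

lemma bij_betw_rect_label:
  assumes par: "odd n \<or> even N"
  shows "bij_betw (rect_label n N) ({1..n} \<times> {0..<N}) {1..n * N}"
proof (rule bij_betw_if_inj_on_card)
  have two: "2 * int (rect_label n N p) = rect_value n N (fst p) (snd p) + int (n * N) + 1"
    if "p \<in> {1..n} \<times> {0..<N}" for p
    using that two_rect_label[OF _ _ par] by (cases p) auto
  show "inj_on (rect_label n N) ({1..n} \<times> {0..<N})"
  proof (rule inj_onI)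
    fix p p' assume p: "p \<in> {1..n} \<times> {0..<N}" and p': "p' \<in> {1..n} \<times> {0..<N}"
      and "rect_label n N p = rect_label n N p'"
    then have "(\<lambda>(c, r). rect_value n N c r) p = (\<lambda>(c, r). rect_value n N c r) p'"
      using two[OF p] two[OF p'] by (simp add: case_prod_beta)
    then show "p = p'" using inj_onD[OF inj_on_rect_value[OF par] _ p p'] by blast
  qed
  show "rect_label n N ` ({1..n} \<times> {0..<N}) \<subseteq> {1..n * N}"
  proof clarify
    fix c r assume cr: "c \<in> {1..n}" "r \<in> {0..<N}"
    then have "\<bar>rect_value n N c r\<bar> \<le> int (n * N) - 1"
      using rect_value_bounds[of c n r N] par by auto
    moreover have "2 * int (rect_label n N (c, r)) = rect_value n N c r + int (n * N) + 1"
      using two[of "(c, r)"] cr by simp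
    ultimately have "2 \<le> 2 * int (rect_label n N (c, r))" "2 * int (rect_label n N (c, r)) \<le> 2 * int (n * N)"
      by linarith+
    then have "int 1 \<le> int (rect_label n N (c, r))" "int (rect_label n N (c, r)) \<le> int (n * N)"
      by linarith+
    then show "rect_label n N (c, r) \<in> {1..n * N}" by (simp only: of_nat_le_iff atLeastAtMost_iff)
  qed
qed simp_all

section \<open>Balanced vertex labellings of grids\<close>

definition unit_cube :: "nat list \<Rightarrow> nat list set" where
  "unit_cube a = {y. length y = length a \<and> (\<forall>i<length a. y ! i = a ! i \<or> y ! i = Suc (a ! i))}"

definition toggle :: "nat list \<Rightarrow> nat \<Rightarrow> nat list \<Rightarrow> nat list" where
  "toggle a i y = y[i := (if y ! i = a ! i then Suc (a ! i) else a ! i)]"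

lemma unit_cube_length: "y \<in> unit_cube a \<Longrightarrow> length y = length a"
  by (simp add: unit_cube_def)

lemma unit_cube_nth: "y \<in> unit_cube a \<Longrightarrow> i < length a \<Longrightarrow> y ! i = a ! i \<or> y ! i = Suc (a ! i)"
  by (simp add: unit_cube_def)

lemma toggle_in_unit_cube: "y \<in> unit_cube a \<Longrightarrow> i < length a \<Longrightarrow> toggle a i y \<in> unit_cube a"
  by (auto simp: unit_cube_def toggle_def nth_list_update)

lemma toggle_toggle:
  assumes "y \<in> unit_cube a" "i < length a"
  shows "toggle a i (toggle a i y) = y"
proof -
  have "i < length y" using assms by (simp add: unit_cube_length)
  show ?thesis
  proof (cases "y ! i = a ! i")
    case True
    with \<open>i < length y\<close> have "toggle a i (toggle a i y) = y[i := a ! i]"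
      by (simp add: toggle_def)
    with True show ?thesis by (metis list_update_id)
  next
    case False
    then have "y ! i = Suc (a ! i)" using unit_cube_nth[OF assms] by simp
    with \<open>i < length y\<close> have "toggle a i (toggle a i y) = y[i := Suc (a ! i)]"
      by (simp add: toggle_def)
    with \<open>y ! i = Suc (a ! i)\<close> show ?thesis by (metis list_update_id)
  qed
qed

lemma toggle_nth_same:
  assumes "y \<in> unit_cube a" "i < length a"
  shows "toggle a i y ! i = Suc (y ! i) \<or> Suc (toggle a i y ! i) = y ! i"
proof -
  have "i < length y" using assms by (simp add: unit_cube_length)
  then show ?thesis
    using unit_cube_nth[OF assms] by (cases "y ! i = a ! i") (simp_all add: toggle_def)
qed

lemma toggle_eq_update: "\<exists>v. toggle a i y = y[i := v]"
  unfolding toggle_def by blast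

lemma bij_betw_toggle:
  assumes "C \<subseteq> unit_cube a" "i < length a" "toggle a i ` C \<subseteq> C"
  shows "bij_betw (toggle a i) C C"
  by (rule bij_betw_byWitness[where f' = "toggle a i"]) (use assms toggle_toggle in auto)

definition grid_enum :: "nat list \<Rightarrow> nat list \<Rightarrow> nat" where
  "grid_enum m = (SOME \<beta>. bij_betw \<beta> (grid_verts m) {0..<prod_list m})"

lemma bij_betw_grid_enum: "bij_betw (grid_enum m) (grid_verts m) {0..<prod_list m}"
proof -
  have "\<exists>\<beta>. bij_betw \<beta> (grid_verts m) {0..<prod_list m}"
    using ex_bij_betw_finite_nat[OF finite_grid_verts] by (simp add: card_grid_verts)
  then show ?thesis unfolding grid_enum_def by (rule someI_ex)
qed

text \<open>Number the vertices of the grid by \<open>(x!j, row_index m j k x)\<close>: coordinate \<open>k\<close> is the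
  least significant digit of the row, so moving along direction \<open>j\<close> keeps the row and moving
  along direction \<open>k\<close> changes it by one.\<close>
definition row_index :: "nat list \<Rightarrow> nat \<Rightarrow> nat \<Rightarrow> nat list \<Rightarrow> nat" where
  "row_index m j k x = (x ! k - 1) + m ! k * grid_enum (m[j := 1, k := 1]) (x[j := 1, k := 1])"

definition row_count :: "nat list \<Rightarrow> nat \<Rightarrow> nat \<Rightarrow> nat" where
  "row_count m j k = m ! k * prod_list (m[j := 1, k := 1])"

lemma prod_list_eq_row_count:
  assumes "j \<noteq> k" "j < length m" "k < length m"
  shows "prod_list m = m ! j * row_count m j k"
  using assms prod_list_update_one[of j m] prod_list_update_one[of k "m[j := 1]"]
  by (simp add: row_count_def)

lemma grid_verts_reset:
  assumes "x \<in> grid_verts m"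
  shows "x[j := 1, k := 1] \<in> grid_verts (m[j := 1, k := 1])"
proof (rule grid_vertsI)
  show "length (x[j := 1, k := 1]) = length (m[j := 1, k := 1])"
    using assms by (simp add: grid_verts_length)
  fix i assume "i < length (m[j := 1, k := 1])"
  with grid_verts_nth[OF assms, of i] assms show "1 \<le> x[j := 1, k := 1] ! i \<and> x[j := 1, k := 1] ! i \<le> m[j := 1, k := 1] ! i"
    by (cases "i = k"; cases "i = j") (simp_all add: grid_verts_length)
qed

lemma row_index_update_j:
  "j \<noteq> k \<Longrightarrow> row_index m j k (x[j := v]) = row_index m j k x"
  by (simp add: row_index_def)

lemma row_index_update_k:
  assumes "j \<noteq> k" "k < length x" "1 \<le> v" "1 \<le> x ! k"
  shows "row_index m j k (x[k := v]) + x ! k = row_index m j k x + v"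
proof -
  have "x[k := v, j := 1, k := 1] = x[j := 1, k := 1]"
    using assms(1) by (metis list_update_overwrite list_update_swap)
  then show ?thesis using assms by (simp add: row_index_def)
qed

lemma bij_betw_row_coords:
  assumes jk: "j \<noteq> k" "j < length m" "k < length m"
  shows "bij_betw (\<lambda>x. (x ! j, row_index m j k x)) (grid_verts m) ({1..m ! j} \<times> {0..<row_count m j k})"
proof (rule bij_betw_if_inj_on_card)
  let ?m' = "m[j := 1, k := 1]"
  let ?\<beta> = "grid_enum ?m'"
  have row: "row_index m j k x + 1 = m ! k * ?\<beta> (x[j := 1, k := 1]) + x ! k"
    if "x \<in> grid_verts m" for x
    using grid_verts_nth[OF that jk(3)] by (simp add: row_index_def)
  have xk: "x ! k \<in> {1..m ! k}" if "x \<in> grid_verts m" for x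
    using grid_verts_nth[OF that jk(3)] by simp
  have \<beta>: "?\<beta> (x[j := 1, k := 1]) < prod_list ?m'" if "x \<in> grid_verts m" for x
    using bij_betwE[OF bij_betw_grid_enum] grid_verts_reset[OF that] by auto
  show "inj_on (\<lambda>x. (x ! j, row_index m j k x)) (grid_verts m)"
  proof (rule inj_onI)
    fix x y assume x: "x \<in> grid_verts m" and y: "y \<in> grid_verts m"
      and eq: "(x ! j, row_index m j k x) = (y ! j, row_index m j k y)"
    then have "m ! k * ?\<beta> (x[j := 1, k := 1]) + x ! k = m ! k * ?\<beta> (y[j := 1, k := 1]) + y ! k"
      using row[OF x] row[OF y] by simp
    then have "?\<beta> (x[j := 1, k := 1]) = ?\<beta> (y[j := 1, k := 1])" and k: "x ! k = y ! k"
      using mult_add_digit_inject[OF xk[OF x] xk[OF y]] by auto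
    then have rest: "x[j := 1, k := 1] = y[j := 1, k := 1]"
      using bij_betw_imp_inj_on[OF bij_betw_grid_enum] grid_verts_reset x y by (metis inj_onD)
    show "x = y"
    proof (rule nth_equalityI)
      show "length x = length y" using x y by (simp add: grid_verts_length)
      fix i assume "i < length x"
      have "x[j := 1, k := 1] ! i = y[j := 1, k := 1] ! i" using rest by simp
      then show "x ! i = y ! i"
        using k eq by (cases "i = j \<or> i = k") auto
    qed
  qed
  show "(\<lambda>x. (x ! j, row_index m j k x)) ` grid_verts m \<subseteq> {1..m ! j} \<times> {0..<row_count m j k}"
  proof clarify
    fix x assume x: "x \<in> grid_verts m"
    have "row_index m j k x + 1 \<le> m ! k * ?\<beta> (x[j := 1, k := 1]) + m ! k"
      using row[OF x] xk[OF x] by simp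
    also have "\<dots> = m ! k * (?\<beta> (x[j := 1, k := 1]) + 1)" by simp
    also have "\<dots> \<le> m ! k * prod_list ?m'"
      using \<beta>[OF x] by (intro mult_le_mono2) simp
    finally show "x ! j \<in> {1..m ! j} \<and> row_index m j k x \<in> {0..<row_count m j k}"
      using grid_verts_nth[OF x jk(2)] by (simp add: row_count_def)
  qed
  show "card (grid_verts m) = card ({1..m ! j} \<times> {0..<row_count m j k})"
    using prod_list_eq_row_count[OF jk] by (simp add: card_grid_verts card_cartesian_product)
qed simp

definition grid_label :: "nat list \<Rightarrow> nat \<Rightarrow> nat \<Rightarrow> nat list \<Rightarrow> nat" where
  "grid_label m j k x = rect_label (m ! j) (row_count m j k) (x ! j, row_index m j k x)"

lemma bij_betw_grid_label:
  assumes "j \<noteq> k" "j < length m" "k < length m" "odd (m ! j) \<or> even (row_count m j k)"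
  shows "bij_betw (grid_label m j k) (grid_verts m) {1..prod_list m}"
proof -
  have "grid_label m j k = rect_label (m ! j) (row_count m j k) \<circ> (\<lambda>x. (x ! j, row_index m j k x))"
    by (simp add: fun_eq_iff grid_label_def)
  moreover have "bij_betw \<dots> (grid_verts m) {1..m ! j * row_count m j k}"
    by (rule bij_betw_trans[OF bij_betw_row_coords[OF assms(1-3)] bij_betw_rect_label[OF assms(4)]])
  ultimately show ?thesis using prod_list_eq_row_count[OF assms(1-3)] by simp
qed

lemma row_index_toggle_same: "j \<noteq> k \<Longrightarrow> row_index m j k (toggle a j x) = row_index m j k x"
  using toggle_eq_update row_index_update_j by metis

lemma odd_row_index_toggle:
  assumes "j \<noteq> k" "k < length a" and x: "x \<in> unit_cube a" "x \<in> grid_verts m"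
    and "toggle a k x \<in> grid_verts m"
  shows "odd (row_index m j k (toggle a k x) + row_index m j k x)"
proof -
  obtain w where w: "toggle a k x = x[k := w]" using toggle_eq_update by metis
  have "k < length x" "k < length m"
    using assms(2) x by (simp_all add: unit_cube_length grid_verts_length[symmetric])
  have "1 \<le> x[k := w] ! k" using grid_verts_nth[OF assms(5) \<open>k < length m\<close>] w by simp
  then have "1 \<le> w" using \<open>k < length x\<close> by simp
  moreover have "1 \<le> x ! k" using grid_verts_nth[OF x(2) \<open>k < length m\<close>] by simp
  ultimately have "row_index m j k (x[k := w]) + x ! k = row_index m j k x + w"
    by (rule row_index_update_k[OF assms(1) \<open>k < length x\<close>])
  moreover have "w = Suc (x ! k) \<or> Suc w = x ! k"
    using toggle_nth_same[OF x(1) assms(2)] w \<open>k < length x\<close> by simp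
  ultimately have "row_index m j k (toggle a k x) = Suc (row_index m j k x) \<or>
      Suc (row_index m j k (toggle a k x)) = row_index m j k x"
    unfolding w by linarith
  then show ?thesis by (rule odd_plus_Suc)
qed

lemma rect_value_grid_sum_eq_0:
  assumes jk: "j \<noteq> k" "j < length m" "k < length m"
    and C: "C \<subseteq> grid_verts m" "C \<subseteq> unit_cube a" "toggle a j ` C \<subseteq> C" "toggle a k ` C \<subseteq> C"
  shows "(\<Sum>x\<in>C. rect_value n N (x ! j) (row_index m j k x)) = 0"
proof (cases "C = {}")
  case False
  then have len_a: "length a = length m"
    using C(1,2) grid_verts_length unit_cube_length by fastforce
  define \<kappa> where "\<kappa> = (if even N then 1 else int n + 1)"
  let ?c = "\<lambda>x. x ! j" and ?r = "row_index m j k"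
  have "(\<Sum>x\<in>C. rect_value n N (?c x) (?r x)) =
      (\<Sum>x\<in>C. (-1) ^ (?c x + ?r x) * ((2 * int (n * row_block N (?r x)) - \<kappa>) + 2 * int (?c x)))"
    by (simp add: rect_value_def rect_base_def \<kappa>_def algebra_simps)
  also have "\<dots> = 0"
  proof (rule alternating_sum_eq_0)
    show "bij_betw (toggle a j) C C" "bij_betw (toggle a k) C C"
      using bij_betw_toggle C(2-4) len_a jk by auto
    fix x assume "x \<in> C"
    then have x: "x \<in> unit_cube a" "x \<in> grid_verts m" and "toggle a k x \<in> grid_verts m"
      using C by auto
    have "odd (?c (toggle a j x) + ?c x)"
      using toggle_nth_same[OF x(1), of j] jk len_a by (intro odd_plus_Suc) simp
    then show "odd (?c (toggle a j x) + ?c x) \<and> ?r (toggle a j x) = ?r x"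
      using row_index_toggle_same[OF jk(1)] by simp
    have "?c (toggle a k x) = ?c x" using jk(1) by (simp add: toggle_def)
    then show "?c (toggle a k x) = ?c x \<and> odd (?r (toggle a k x) + ?r x)"
      using odd_row_index_toggle[OF jk(1) _ x \<open>toggle a k x \<in> grid_verts m\<close>] jk len_a by simp
  qed
  finally show ?thesis .
qed simp

lemma grid_label_sum:
  assumes jk: "j \<noteq> k" "j < length m" "k < length m" and par: "odd (m ! j) \<or> even (row_count m j k)"
    and C: "C \<subseteq> grid_verts m" "C \<subseteq> unit_cube a" "toggle a j ` C \<subseteq> C" "toggle a k ` C \<subseteq> C"
  shows "2 * (\<Sum>x\<in>C. grid_label m j k x) = card C * (prod_list m + 1)"
proof -
  define n N where "n = m ! j" and "N = row_count m j k"
  let ?c = "\<lambda>x. x ! j" and ?r = "row_index m j k"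
  have P: "prod_list m = n * N" using prod_list_eq_row_count[OF jk] by (simp add: n_def N_def)
  have two: "2 * int (grid_label m j k x) = rect_value n N (?c x) (?r x) + int (n * N) + 1"
    if "x \<in> C" for x
  proof -
    have "(?c x, ?r x) \<in> {1..n} \<times> {0..<N}"
      using bij_betwE[OF bij_betw_row_coords[OF jk]] C(1) that by (auto simp: n_def N_def)
    then show ?thesis using two_rect_label[of "?c x" n "?r x" N] par
      by (simp add: grid_label_def n_def N_def)
  qed
  have "int (2 * (\<Sum>x\<in>C. grid_label m j k x)) = (\<Sum>x\<in>C. 2 * int (grid_label m j k x))"
    by (simp add: sum_distrib_left)
  also have "\<dots> = (\<Sum>x\<in>C. rect_value n N (?c x) (?r x) + (int (n * N) + 1))"
    using two by (intro sum.cong) auto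
  also have "\<dots> = int (card C * (prod_list m + 1))"
    using rect_value_grid_sum_eq_0[OF jk C] P by (simp add: sum.distrib algebra_simps)
  finally show ?thesis by (simp only: of_nat_eq_iff)
qed

lemma even_row_count: "even (m ! k) \<Longrightarrow> even (row_count m j k)"
  by (simp add: row_count_def)

text \<open>Labelling along \<open>(p, q)\<close> needs \<open>odd (m ! p) \<or> even (row_count m p q)\<close>; when
  \<open>m ! p\<close> is even the swapped orientation \<open>(q, p)\<close> satisfies it instead.\<close>
definition balanced_label :: "nat list \<Rightarrow> nat \<Rightarrow> nat \<Rightarrow> nat list \<Rightarrow> nat" where
  "balanced_label m p q =
     (if odd (m ! p) \<or> even (row_count m p q) then grid_label m p q else grid_label m q p)"

lemma bij_betw_balanced_label:
  assumes "p \<noteq> q" "p < length m" "q < length m"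
  shows "bij_betw (balanced_label m p q) (grid_verts m) {1..prod_list m}"
  using assms bij_betw_grid_label[of p q m] bij_betw_grid_label[of q p m] even_row_count[of m p q]
  by (auto simp: balanced_label_def)

lemma balanced_label_sum:
  assumes "p \<noteq> q" "p < length m" "q < length m"
    and "C \<subseteq> grid_verts m" "C \<subseteq> unit_cube a" "toggle a p ` C \<subseteq> C" "toggle a q ` C \<subseteq> C"
  shows "2 * (\<Sum>x\<in>C. balanced_label m p q x) = card C * (prod_list m + 1)"
  using assms grid_label_sum[of p q m C a] grid_label_sum[of q p m C a] even_row_count[of m p q]
  by (auto simp: balanced_label_def)

section \<open>Copies of the cube are unit cubes\<close>

lemma common_neighbour_nat:
  fixes x p q u :: nat
  assumes "p = Suc u \<or> u = Suc p" "q = Suc u \<or> u = Suc q" "p \<noteq> q"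
  shows "x = Suc p \<or> p = Suc x \<Longrightarrow> x = Suc q \<or> q = Suc x \<Longrightarrow> x = u"
  using assms by arith

lemma common_neighbour_of_opposite_neighbours:
  assumes len: "length x = d" "length p = d" "length q = d" "length u = d" and "\<alpha> < d"
    and xp: "adjacent d x p" and xq: "adjacent d x q" and "p \<noteq> q"
    and agree: "\<And>j. j < d \<Longrightarrow> j \<noteq> \<alpha> \<Longrightarrow> p ! j = u ! j \<and> q ! j = u ! j"
    and pu: "p ! \<alpha> = Suc (u ! \<alpha>) \<or> u ! \<alpha> = Suc (p ! \<alpha>)"
    and qu: "q ! \<alpha> = Suc (u ! \<alpha>) \<or> u ! \<alpha> = Suc (q ! \<alpha>)"
  shows "x = u"
proof -
  have pq: "p ! \<alpha> \<noteq> q ! \<alpha>"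
  proof
    assume "p ! \<alpha> = q ! \<alpha>"
    then have "p = q" using len agree by (intro nth_equalityI) (auto, metis)
    with \<open>p \<noteq> q\<close> show False by simp
  qed
  obtain g where g: "g < d" "\<And>j. j < d \<Longrightarrow> j \<noteq> g \<Longrightarrow> x ! j = p ! j"
      "x ! g = Suc (p ! g) \<or> p ! g = Suc (x ! g)"
    using xp unfolding adjacent_def by blast
  obtain h where h: "h < d" "\<And>j. j < d \<Longrightarrow> j \<noteq> h \<Longrightarrow> x ! j = q ! j"
      "x ! h = Suc (q ! h) \<or> q ! h = Suc (x ! h)"
    using xq unfolding adjacent_def by blast
  have "g = \<alpha>"
  proof (rule ccontr)
    assume "g \<noteq> \<alpha>"
    then have "h = \<alpha>" using g h pq \<open>\<alpha> < d\<close> by metis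
    then have "x ! g = q ! g" using h(2) g(1) \<open>g \<noteq> \<alpha>\<close> by simp
    then show False using g(3) agree[OF g(1) \<open>g \<noteq> \<alpha>\<close>] by simp
  qed
  have "h = \<alpha>"
  proof (rule ccontr)
    assume "h \<noteq> \<alpha>"
    then have "x ! h = p ! h" using g(2) h(1) \<open>g = \<alpha>\<close> by simp
    then show False using h(3) agree[OF h(1) \<open>h \<noteq> \<alpha>\<close>] by simp
  qed
  show "x = u"
  proof (rule nth_equalityI)
    show "length x = length u" using len by simp
    fix j assume "j < length x"
    show "x ! j = u ! j"
    proof (cases "j = \<alpha>")
      case True
      have "x ! \<alpha> = Suc (p ! \<alpha>) \<or> p ! \<alpha> = Suc (x ! \<alpha>)" "x ! \<alpha> = Suc (q ! \<alpha>) \<or> q ! \<alpha> = Suc (x ! \<alpha>)"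
        using g(3) h(3) \<open>g = \<alpha>\<close> \<open>h = \<alpha>\<close> by simp_all
      then show ?thesis using common_neighbour_nat[OF pu qu pq] True by blast
    next
      case False
      then show ?thesis using g(2) agree \<open>g = \<alpha>\<close> \<open>j < length x\<close> len by simp
    qed
  qed
qed

lemma common_neighbours_of_distance_two:
  assumes len: "length x = d" "length p = d" "length q = d"
    and "\<alpha> \<noteq> \<beta>" "\<alpha> < d" "\<beta> < d"
    and xp: "adjacent d x p" and xq: "adjacent d x q"
    and diff: "p ! \<alpha> \<noteq> q ! \<alpha>" "p ! \<beta> \<noteq> q ! \<beta>"
    and agree: "\<And>j. j < d \<Longrightarrow> j \<noteq> \<alpha> \<Longrightarrow> j \<noteq> \<beta> \<Longrightarrow> p ! j = q ! j"
  shows "x = p[\<alpha> := q ! \<alpha>] \<or> x = p[\<beta> := q ! \<beta>]"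
proof -
  obtain g where g: "g < d" "\<And>j. j < d \<Longrightarrow> j \<noteq> g \<Longrightarrow> x ! j = p ! j"
    using xp unfolding adjacent_def by blast
  obtain h where h: "h < d" "\<And>j. j < d \<Longrightarrow> j \<noteq> h \<Longrightarrow> x ! j = q ! j"
    using xq unfolding adjacent_def by blast
  have "(g = \<alpha> \<and> h = \<beta>) \<or> (g = \<beta> \<and> h = \<alpha>)"
    using g h diff \<open>\<alpha> \<noteq> \<beta>\<close> \<open>\<alpha> < d\<close> \<open>\<beta> < d\<close> by metis
  then show ?thesis
  proof
    assume "g = \<alpha> \<and> h = \<beta>"
    then have "x = p[\<alpha> := q ! \<alpha>]"
      using len g h agree \<open>\<alpha> \<noteq> \<beta>\<close> by (intro nth_equalityI) (auto simp: nth_list_update)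
    then show ?thesis ..
  next
    assume "g = \<beta> \<and> h = \<alpha>"
    then have "x = p[\<beta> := q ! \<beta>]"
      using len g h agree \<open>\<alpha> \<noteq> \<beta>\<close> by (intro nth_equalityI) (auto simp: nth_list_update)
    then show ?thesis ..
  qed
qed

text \<open>An injective, adjacency-preserving map of the vertices of \<open>Q_d\<close> to \<open>d\<close>-dimensional lattice
  points has a unit cube as image. The images of the \<open>d\<close> neighbours of the corner \<open>(1, \<dots>, 1)\<close>
  differ from the image of that corner in pairwise distinct coordinates; by induction on the
  number of coordinates equal to \<open>2\<close>, every further vertex is mapped to the unique common
  neighbour of two earlier images that is not the image of a vertex two levels down.\<close>
locale cube_map =
  fixes d :: nat and \<psi> :: "nat list \<Rightarrow> nat list"
  assumes inj_map: "inj_on \<psi> (grid_verts (replicate d 2))"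
    and length_map: "z \<in> grid_verts (replicate d 2) \<Longrightarrow> length (\<psi> z) = d"
    and adjacent_map: "z \<in> grid_verts (replicate d 2) \<Longrightarrow> z' \<in> grid_verts (replicate d 2) \<Longrightarrow>
       adjacent d z z' \<Longrightarrow> adjacent d (\<psi> z) (\<psi> z')"
begin

definition corner :: "nat set \<Rightarrow> nat list" where
  "corner T = map (\<lambda>l. if l \<in> T then 2 else 1) [0..<d]"

lemma length_corner [simp]: "length (corner T) = d"
  by (simp add: corner_def)

lemma nth_corner: "l < d \<Longrightarrow> corner T ! l = (if l \<in> T then 2 else 1)"
  by (simp add: corner_def)

lemma corner_in_cube: "corner T \<in> grid_verts (replicate d 2)"
  by (rule grid_vertsI) (auto simp: nth_corner)

lemma corner_inject:
  assumes "T \<subseteq> {..<d}" "T' \<subseteq> {..<d}" "corner T = corner T'"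
  shows "T = T'"
proof -
  have "l \<in> T \<longleftrightarrow> l \<in> T'" if "l < d" for l
    using arg_cong[OF assms(3), of "\<lambda>z. z ! l"] that by (auto simp: nth_corner split: if_splits)
  then show ?thesis using assms(1,2) by blast
qed

lemma cube_vertex_eq_corner:
  assumes "z \<in> grid_verts (replicate d 2)"
  shows "z = corner {l. l < d \<and> z ! l = 2}"
proof (rule nth_equalityI)
  show "length z = length (corner {l. l < d \<and> z ! l = 2})"
    using grid_verts_length[OF assms] by simp
  fix l assume "l < length z"
  then have "l < d" using grid_verts_length[OF assms] by simp
  with grid_verts_nth[OF assms, of l] show "z ! l = corner {l. l < d \<and> z ! l = 2} ! l"
    by (auto simp: nth_corner)
qed

lemma length_map_corner [simp]: "length (\<psi> (corner T)) = d"
  using length_map corner_in_cube by blast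

lemma map_corner_inject:
  "T \<subseteq> {..<d} \<Longrightarrow> T' \<subseteq> {..<d} \<Longrightarrow> \<psi> (corner T) = \<psi> (corner T') \<Longrightarrow> T = T'"
  using inj_map corner_in_cube corner_inject by (metis inj_onD)

lemma adjacent_map_corner:
  assumes "k \<in> T" "k < d"
  shows "adjacent d (\<psi> (corner T)) (\<psi> (corner (T - {k})))"
proof -
  have "adjacent d (corner T) (corner (T - {k}))"
    unfolding adjacent_def using assms by (intro exI[of _ k]) (auto simp: nth_corner)
  then show ?thesis using adjacent_map corner_in_cube by blast
qed

definition origin :: "nat list" where "origin = \<psi> (corner {})"

definition neighbour :: "nat \<Rightarrow> nat list" where "neighbour k = \<psi> (corner {k})"

definition dir :: "nat \<Rightarrow> nat" where
  "dir k = (SOME \<alpha>. \<alpha> < d \<and> (\<forall>j<d. j \<noteq> \<alpha> \<longrightarrow> origin ! j = neighbour k ! j) \<and>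
     (origin ! \<alpha> = Suc (neighbour k ! \<alpha>) \<or> neighbour k ! \<alpha> = Suc (origin ! \<alpha>)))"

lemma dir_spec:
  assumes "k < d"
  shows "dir k < d \<and> (\<forall>j<d. j \<noteq> dir k \<longrightarrow> origin ! j = neighbour k ! j) \<and>
    (origin ! dir k = Suc (neighbour k ! dir k) \<or> neighbour k ! dir k = Suc (origin ! dir k))"
proof -
  have "adjacent d origin (neighbour k)"
    using adjacent_map_corner[of k "{k}"] assms by (simp add: origin_def neighbour_def adjacent_sym)
  then show ?thesis unfolding dir_def adjacent_def by (rule someI_ex)
qed

lemma inj_on_dir: "inj_on dir {..<d}"
proof (rule inj_onI, rule ccontr)
  fix k l assume k: "k \<in> {..<d}" and l: "l \<in> {..<d}" and "dir k = dir l" "k \<noteq> l"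
  have "{k, l} - {l} = {k}" "{k, l} - {k} = {l}" using \<open>k \<noteq> l\<close> by auto
  then have "adjacent d (\<psi> (corner {k, l})) (neighbour k)" "adjacent d (\<psi> (corner {k, l})) (neighbour l)"
    using adjacent_map_corner[of l "{k, l}"] adjacent_map_corner[of k "{k, l}"] k l
    by (simp_all add: neighbour_def)
  moreover have "neighbour k \<noteq> neighbour l"
    using map_corner_inject[of "{k}" "{l}"] k l \<open>k \<noteq> l\<close> by (auto simp: neighbour_def)
  ultimately have "\<psi> (corner {k, l}) = origin"
    using dir_spec[of k] dir_spec[of l] k l \<open>dir k = dir l\<close>
    by (intro common_neighbour_of_opposite_neighbours[of _ d "neighbour k" "neighbour l" _ "dir k"])
       (auto simp: origin_def neighbour_def)
  then have "{k, l} = {}"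
    using map_corner_inject[of "{k, l}" "{}"] k l by (auto simp: origin_def)
  then show False by simp
qed

lemma dir_image: "dir ` {..<d} = {..<d}"
  using inj_on_dir dir_spec by (intro endo_inj_surj) auto

definition dir_inv :: "nat \<Rightarrow> nat" where "dir_inv \<alpha> = the_inv_into {..<d} dir \<alpha>"

lemma dir_dir_inv: "\<alpha> < d \<Longrightarrow> dir_inv \<alpha> < d \<and> dir (dir_inv \<alpha>) = \<alpha>"
  unfolding dir_inv_def using inj_on_dir dir_image
  by (metis f_the_inv_into_f image_eqI lessThan_iff the_inv_into_into subset_refl)

lemma dir_inv_dir: "k < d \<Longrightarrow> dir_inv (dir k) = k"
  unfolding dir_inv_def using inj_on_dir by (simp add: the_inv_into_f_f)

definition far :: "nat \<Rightarrow> nat" where "far \<alpha> = neighbour (dir_inv \<alpha>) ! \<alpha>"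

lemma far_adjacent: "\<alpha> < d \<Longrightarrow> far \<alpha> = Suc (origin ! \<alpha>) \<or> origin ! \<alpha> = Suc (far \<alpha>)"
  using dir_spec[of "dir_inv \<alpha>"] dir_dir_inv[of \<alpha>] unfolding far_def by auto

definition target :: "nat set \<Rightarrow> nat list" where
  "target T = map (\<lambda>\<alpha>. if dir_inv \<alpha> \<in> T then far \<alpha> else origin ! \<alpha>) [0..<d]"

lemma length_target [simp]: "length (target T) = d"
  by (simp add: target_def)

lemma nth_target: "\<alpha> < d \<Longrightarrow> target T ! \<alpha> = (if dir_inv \<alpha> \<in> T then far \<alpha> else origin ! \<alpha>)"
  by (simp add: target_def)

lemma map_corner_empty: "\<psi> (corner {}) = target {}"
  by (rule nth_equalityI) (simp_all add: nth_target origin_def)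

lemma map_corner_singleton:
  assumes "k < d"
  shows "\<psi> (corner {k}) = target {k}"
proof (rule nth_equalityI)
  fix \<alpha> assume "\<alpha> < length (\<psi> (corner {k}))"
  then have "\<alpha> < d" by simp
  show "\<psi> (corner {k}) ! \<alpha> = target {k} ! \<alpha>"
  proof (cases "dir_inv \<alpha> = k")
    case True
    then show ?thesis using dir_dir_inv[OF \<open>\<alpha> < d\<close>] \<open>\<alpha> < d\<close> by (auto simp: nth_target far_def neighbour_def)
  next
    case False
    then have "\<alpha> \<noteq> dir k" using dir_inv_dir[OF assms] by auto
    then show ?thesis using False dir_spec[OF assms] \<open>\<alpha> < d\<close> by (simp add: nth_target neighbour_def)
  qed
qed simp

lemma map_corner_step:
  assumes T: "T \<subseteq> {..<d}" and kl: "k \<in> T" "l \<in> T" "k \<noteq> l"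
    and IH: "\<psi> (corner (T - {k})) = target (T - {k})" "\<psi> (corner (T - {l})) = target (T - {l})"
      "\<psi> (corner (T - {k} - {l})) = target (T - {k} - {l})"
  shows "\<psi> (corner T) = target T"
proof -
  have "k < d" "l < d" using T kl by auto
  have dirs: "dir l \<noteq> dir k" "dir l < d" "dir k < d"
    using inj_on_dir dir_spec \<open>k < d\<close> \<open>l < d\<close> kl(3) by (auto dest: inj_onD)
  have inv: "dir_inv (dir l) = l" "dir_inv (dir k) = k" using dir_inv_dir \<open>k < d\<close> \<open>l < d\<close> by auto
  let ?p = "target (T - {k})" and ?q = "target (T - {l})"
  have "?p ! dir l \<noteq> ?q ! dir l" "?p ! dir k \<noteq> ?q ! dir k"
    using far_adjacent[of "dir l"] far_adjacent[of "dir k"] dirs inv kl by (auto simp: nth_target)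
  moreover have "?p ! j = ?q ! j" if "j < d" "j \<noteq> dir l" "j \<noteq> dir k" for j
  proof -
    have "dir_inv j \<noteq> k" "dir_inv j \<noteq> l" using that dir_dir_inv[of j] by auto
    then show ?thesis using that by (simp add: nth_target)
  qed
  moreover have "adjacent d (\<psi> (corner T)) ?p" "adjacent d (\<psi> (corner T)) ?q"
    using adjacent_map_corner kl \<open>k < d\<close> \<open>l < d\<close> IH(1,2) by metis+
  ultimately have "\<psi> (corner T) = ?p[dir l := ?q ! dir l] \<or> \<psi> (corner T) = ?p[dir k := ?q ! dir k]"
    using dirs by (intro common_neighbours_of_distance_two) auto
  moreover have "?p[dir l := ?q ! dir l] = target (T - {k} - {l})"
    using dirs inv dir_dir_inv by (intro nth_equalityI) (auto simp: nth_target nth_list_update)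
  moreover have "?p[dir k := ?q ! dir k] = target T"
    using dirs inv dir_dir_inv kl by (intro nth_equalityI) (auto simp: nth_target nth_list_update)
  moreover have "\<psi> (corner T) \<noteq> \<psi> (corner (T - {k} - {l}))"
    using map_corner_inject[OF T, of "T - {k} - {l}"] T kl by blast
  ultimately show ?thesis using IH(3) by metis
qed

lemma map_corner_eq_target: "T \<subseteq> {..<d} \<Longrightarrow> \<psi> (corner T) = target T"
proof (induction "card T" arbitrary: T rule: less_induct)
  case less
  have "finite T" using less.prems finite_subset by blast
  consider "T = {}" | k where "T = {k}" | k l where "k \<in> T" "l \<in> T" "k \<noteq> l"
    by (metis insertI1 subsetI singletonD subset_singletonD)
  then show ?case
  proof cases
    case (2 k)
    then show ?thesis using map_corner_singleton less.prems by auto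
  next
    case (3 k l)
    have "card (T - {k}) < card T" "card (T - {l}) < card T"
      using card_Diff1_less[OF \<open>finite T\<close>] 3 by blast+
    moreover have "card (T - {k} - {l}) < card (T - {k})"
      using card_Diff1_less[of "T - {k}" l] \<open>finite T\<close> 3 by blast
    ultimately have "card (T - {k} - {l}) < card T" by linarith
    have IH: "\<psi> (corner T') = target T'" if "card T' < card T" "T' \<subseteq> T" for T'
      using less.hyps less.prems that by blast
    show ?thesis
      by (rule map_corner_step[OF less.prems 3]; rule IH)
        (use \<open>card (T - {k}) < card T\<close> \<open>card (T - {l}) < card T\<close> \<open>card (T - {k} - {l}) < card T\<close> in auto)
  qed (simp add: map_corner_empty)
qed

definition base :: "nat list" where
  "base = map (\<lambda>\<alpha>. min (origin ! \<alpha>) (far \<alpha>)) [0..<d]"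

lemma length_base: "length base = d"
  by (simp add: base_def)

lemma image_eq_unit_cube: "\<psi> ` grid_verts (replicate d 2) = unit_cube base"
proof (intro equalityI subsetI)
  fix y assume "y \<in> \<psi> ` grid_verts (replicate d 2)"
  then obtain z where z: "z \<in> grid_verts (replicate d 2)" "y = \<psi> z" by blast
  then have "y = target {l. l < d \<and> z ! l = 2}"
    using map_corner_eq_target cube_vertex_eq_corner by (metis (no_types, lifting) mem_Collect_eq subsetI lessThan_iff)
  moreover have "target T ! \<alpha> = base ! \<alpha> \<or> target T ! \<alpha> = Suc (base ! \<alpha>)" if "\<alpha> < d" for \<alpha> T
    using far_adjacent[OF that] that by (auto simp: base_def nth_target)
  ultimately show "y \<in> unit_cube base" by (simp add: unit_cube_def length_base)
next
  fix y assume y: "y \<in> unit_cube base"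
  define T where "T = {k. k < d \<and> y ! dir k \<noteq> origin ! dir k}"
  have "target T = y"
  proof (rule nth_equalityI)
    show "length (target T) = length y" using y by (simp add: unit_cube_length length_base)
    fix \<alpha> assume "\<alpha> < length (target T)"
    then have "\<alpha> < d" by simp
    have "dir_inv \<alpha> \<in> T \<longleftrightarrow> y ! \<alpha> \<noteq> origin ! \<alpha>" using dir_dir_inv[OF \<open>\<alpha> < d\<close>] by (auto simp: T_def)
    then show "target T ! \<alpha> = y ! \<alpha>"
      using unit_cube_nth[OF y, of \<alpha>] far_adjacent[OF \<open>\<alpha> < d\<close>] \<open>\<alpha> < d\<close>
      by (auto simp: nth_target base_def length_base)
  qed
  moreover have "T \<subseteq> {..<d}" by (auto simp: T_def)
  ultimately have "y = \<psi> (corner T)" using map_corner_eq_target by simp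
  then show "y \<in> \<psi> ` grid_verts (replicate d 2)" using corner_in_cube by blast
qed

end

definition cube_base :: "nat list \<Rightarrow> nat list \<Rightarrow> bool" where
  "cube_base ns a \<longleftrightarrow> length a = length ns \<and> (\<forall>i<length ns. 1 \<le> a ! i \<and> Suc (a ! i) \<le> ns ! i)"

definition unit_cube_edges :: "nat list \<Rightarrow> nat list \<Rightarrow> nat list set set" where
  "unit_cube_edges ns a = {e \<in> grid_edges ns. e \<subseteq> unit_cube a}"

definition cube_shift :: "nat list \<Rightarrow> nat list \<Rightarrow> nat list" where
  "cube_shift a y = map (\<lambda>i. y ! i + 1 - a ! i) [0..<length a]"

lemma unit_cube_subset_grid: "cube_base ns a \<Longrightarrow> unit_cube a \<subseteq> grid_verts ns"
  unfolding cube_base_def unit_cube_def grid_verts_def by force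

lemma cube_base_if_unit_cube_subset:
  assumes "length a = length ns" "unit_cube a \<subseteq> grid_verts ns"
  shows "cube_base ns a"
proof -
  have "1 \<le> a ! i \<and> Suc (a ! i) \<le> ns ! i" if "i < length ns" for i
  proof -
    have "a \<in> unit_cube a" "a[i := Suc (a ! i)] \<in> unit_cube a"
      using that assms(1) by (auto simp: unit_cube_def nth_list_update)
    then have "a \<in> grid_verts ns" "a[i := Suc (a ! i)] \<in> grid_verts ns" using assms(2) by auto
    then show ?thesis
      using grid_verts_nth[of _ ns i] that assms(1) by fastforce
  qed
  then show ?thesis using assms(1) by (simp add: cube_base_def)
qed

lemma bij_betw_cube_shift:
  "bij_betw (cube_shift a) (unit_cube a) (grid_verts (replicate (length a) 2))"
proof (rule bij_betw_byWitness[where f' = "\<lambda>z. map (\<lambda>i. z ! i + a ! i - 1) [0..<length a]"])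
  show "\<forall>y\<in>unit_cube a. map (\<lambda>i. cube_shift a y ! i + a ! i - 1) [0..<length a] = y"
    by (auto simp: cube_shift_def unit_cube_def intro!: nth_equalityI)
  show "\<forall>z\<in>grid_verts (replicate (length a) 2).
      cube_shift a (map (\<lambda>i. z ! i + a ! i - 1) [0..<length a]) = z"
  proof
    fix z assume z: "z \<in> grid_verts (replicate (length a) 2)"
    show "cube_shift a (map (\<lambda>i. z ! i + a ! i - 1) [0..<length a]) = z"
    proof (rule nth_equalityI)
      show "length (cube_shift a (map (\<lambda>i. z ! i + a ! i - 1) [0..<length a])) = length z"
        using grid_verts_length[OF z] by (simp add: cube_shift_def)
      fix i assume "i < length (cube_shift a (map (\<lambda>i. z ! i + a ! i - 1) [0..<length a]))"
      then have "i < length a" by (simp add: cube_shift_def)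
      with grid_verts_nth[OF z, of i]
      show "cube_shift a (map (\<lambda>i. z ! i + a ! i - 1) [0..<length a]) ! i = z ! i"
        by (simp add: cube_shift_def)
    qed
  qed
  show "cube_shift a ` unit_cube a \<subseteq> grid_verts (replicate (length a) 2)"
    by (auto simp: cube_shift_def unit_cube_def intro!: grid_vertsI)
  show "(\<lambda>z. map (\<lambda>i. z ! i + a ! i - 1) [0..<length a]) ` grid_verts (replicate (length a) 2)
      \<subseteq> unit_cube a"
  proof clarify
    fix z assume z: "z \<in> grid_verts (replicate (length a) 2)"
    have "z ! i + a ! i - 1 = a ! i \<or> z ! i + a ! i - 1 = Suc (a ! i)" if "i < length a" for i
      using grid_verts_nth[OF z, of i] that by auto
    then show "map (\<lambda>i. z ! i + a ! i - 1) [0..<length a] \<in> unit_cube a"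
      by (auto simp: unit_cube_def)
  qed
qed

lemma adjacent_cube_shift_iff:
  assumes "x \<in> unit_cube a" "y \<in> unit_cube a"
  shows "adjacent (length a) (cube_shift a x) (cube_shift a y) \<longleftrightarrow> adjacent (length a) x y"
proof -
  have "cube_shift a x ! i = cube_shift a y ! i \<longleftrightarrow> x ! i = y ! i"
    "cube_shift a x ! i = Suc (cube_shift a y ! i) \<longleftrightarrow> x ! i = Suc (y ! i)"
    "cube_shift a y ! i = Suc (cube_shift a x ! i) \<longleftrightarrow> y ! i = Suc (x ! i)"
    if "i < length a" for i
    using unit_cube_nth[OF assms(1) that] unit_cube_nth[OF assms(2) that] that
    by (auto simp: cube_shift_def)
  then show ?thesis unfolding adjacent_def by (metis (no_types, lifting))
qed

lemma cube_shift_edges: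
  assumes base: "cube_base ns a"
  shows "(\<lambda>e. cube_shift a ` e) ` unit_cube_edges ns a = grid_edges (replicate (length ns) 2)"
proof -
  let ?Q = "grid_verts (replicate (length ns) 2)"
  have la: "length a = length ns" using base by (simp add: cube_base_def)
  have shift: "bij_betw (cube_shift a) (unit_cube a) ?Q"
    using bij_betw_cube_shift[of a] la by simp
  have sub: "unit_cube a \<subseteq> grid_verts ns" by (rule unit_cube_subset_grid[OF base])
  show ?thesis
  proof (intro equalityI subsetI)
    fix e' assume "e' \<in> (\<lambda>e. cube_shift a ` e) ` unit_cube_edges ns a"
    then obtain e where e: "e \<in> grid_edges ns" "e \<subseteq> unit_cube a" "e' = cube_shift a ` e"
      by (auto simp: unit_cube_edges_def)
    then obtain x y where xy: "e = {x, y}" "adjacent (length ns) x y" by (auto elim: grid_edgesE)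
    then have "x \<in> unit_cube a" "y \<in> unit_cube a" using e(2) by auto
    then have "adjacent (length ns) (cube_shift a x) (cube_shift a y)"
      "cube_shift a x \<in> ?Q" "cube_shift a y \<in> ?Q"
      using adjacent_cube_shift_iff[of x a y] xy(2) la bij_betwE[OF shift] by auto
    then show "e' \<in> grid_edges (replicate (length ns) 2)"
      using doubleton_in_grid_edges_iff[of _ "replicate (length ns) 2"] e(3) xy(1) by simp
  next
    fix e' assume "e' \<in> grid_edges (replicate (length ns) 2)"
    then obtain z z' where zz: "e' = {z, z'}" "z \<in> ?Q" "z' \<in> ?Q" "adjacent (length ns) z z'"
      by (auto elim: grid_edgesE)
    obtain x y where x: "x \<in> unit_cube a" "cube_shift a x = z" and y: "y \<in> unit_cube a" "cube_shift a y = z'"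
      using zz(2,3) shift by (metis bij_betw_imp_surj_on imageE)
    have "adjacent (length ns) x y" using adjacent_cube_shift_iff[OF x(1) y(1)] x y zz la by simp
    then have "{x, y} \<in> unit_cube_edges ns a"
      using doubleton_in_grid_edges_iff sub x y by (auto simp: unit_cube_edges_def)
    moreover have "e' = cube_shift a ` {x, y}" using zz x y by simp
    ultimately show "e' \<in> (\<lambda>e. cube_shift a ` e) ` unit_cube_edges ns a" by blast
  qed
qed

lemma unit_cube_in_copies:
  assumes "cube_base ns a"
  shows "(unit_cube a, unit_cube_edges ns a) \<in> copies (grid ns) (cube (length ns))"
proof -
  have "length a = length ns" using assms by (simp add: cube_base_def)
  then show ?thesis
    unfolding copies_def subgraph_def graph_iso_def grid_def cube_def verts_def edges_def
    using unit_cube_subset_grid[OF assms] bij_betw_cube_shift[of a] cube_shift_edges[OF assms]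
    by (auto simp: unit_cube_edges_def)
qed

lemma card_unit_cube_edges:
  assumes "cube_base ns a"
  shows "card (unit_cube_edges ns a) = card (grid_edges (replicate (length ns) 2))"
proof -
  have "length a = length ns" using assms by (simp add: cube_base_def)
  then have "inj_on (cube_shift a) (\<Union> (unit_cube_edges ns a))"
    using bij_betw_imp_inj_on[OF bij_betw_cube_shift[of a]]
    by (rule_tac inj_on_subset) (auto simp: unit_cube_edges_def)
  then have "inj_on (\<lambda>e. cube_shift a ` e) (unit_cube_edges ns a)" by (rule inj_on_image)
  then show ?thesis using card_image cube_shift_edges[OF assms] by metis
qed

lemma finite_unit_cube_edges: "finite (unit_cube_edges ns a)"
proof -
  have "unit_cube_edges ns a \<subseteq> Pow (grid_verts ns)"
    by (auto simp: unit_cube_edges_def elim!: grid_edgesE)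
  then show ?thesis using finite_grid_verts by (meson finite_Pow_iff finite_subset)
qed

lemma copy_eq_unit_cube:
  assumes S: "S \<in> copies (grid ns) (cube (length ns))"
  obtains a where "cube_base ns a" "verts S = unit_cube a" "edges S = unit_cube_edges ns a"
proof -
  let ?Q = "grid_verts (replicate (length ns) 2)"
  let ?E = "grid_edges (replicate (length ns) 2)"
  have sub: "verts S \<subseteq> grid_verts ns" "edges S \<subseteq> grid_edges ns" "\<And>e. e \<in> edges S \<Longrightarrow> e \<subseteq> verts S"
    using S unfolding copies_def subgraph_def grid_def verts_def edges_def by auto
  obtain \<phi> where \<phi>: "bij_betw \<phi> (verts S) ?Q" "(\<lambda>e. \<phi> ` e) ` edges S = ?E"
    using S unfolding copies_def graph_iso_def cube_def grid_def verts_def edges_def by auto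
  define \<psi> where "\<psi> = the_inv_into (verts S) \<phi>"
  have \<psi>: "bij_betw \<psi> ?Q (verts S)" unfolding \<psi>_def by (rule bij_betw_the_inv_into[OF \<phi>(1)])
  have \<psi>\<phi>: "\<psi> (\<phi> v) = v" if "v \<in> verts S" for v
    unfolding \<psi>_def using \<phi>(1) that by (simp add: bij_betw_def the_inv_into_f_f)
  interpret cube_map "length ns" \<psi>
  proof
    show "inj_on \<psi> ?Q" using \<psi> by (rule bij_betw_imp_inj_on)
    show "length (\<psi> z) = length ns" if "z \<in> ?Q" for z
      using bij_betwE[OF \<psi>] sub(1) that grid_verts_length by blast
    fix z z' assume z: "z \<in> ?Q" and z': "z' \<in> ?Q" and "adjacent (length ns) z z'"
    then have "{z, z'} \<in> (\<lambda>e. \<phi> ` e) ` edges S"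
      using doubleton_in_grid_edges_iff[OF z z'] \<phi>(2) by simp
    then obtain e where e: "e \<in> edges S" "\<phi> ` e = {z, z'}" by blast
    have "e = \<psi> ` \<phi> ` e" using sub(3)[OF e(1)] \<psi>\<phi> by (force simp: image_image)
    then have "{\<psi> z, \<psi> z'} \<in> grid_edges ns" using e sub(2) by auto
    moreover have "\<psi> z \<in> grid_verts ns" "\<psi> z' \<in> grid_verts ns"
      using bij_betwE[OF \<psi>] z z' sub(1) by auto
    ultimately show "adjacent (length ns) (\<psi> z) (\<psi> z')"
      using doubleton_in_grid_edges_iff by blast
  qed
  have V: "verts S = unit_cube base"
    using image_eq_unit_cube \<psi> by (simp add: bij_betw_def)
  have ok: "cube_base ns base"
    using cube_base_if_unit_cube_subset length_base V sub(1) by simp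
  have "inj_on \<phi> (\<Union> (edges S))"
    by (rule inj_on_subset[OF bij_betw_imp_inj_on[OF \<phi>(1)]]) (use sub(3) in blast)
  then have "card (edges S) = card ?E"
    using card_image inj_on_image \<phi>(2) by metis
  then have "edges S = unit_cube_edges ns base"
    using sub V card_unit_cube_edges[OF ok] finite_unit_cube_edges
    by (intro card_subset_eq) (auto simp: unit_cube_edges_def)
  with ok V that show ?thesis by blast
qed

section \<open>Edges of the grid and of its unit cubes\<close>

definition edge_at :: "nat \<times> nat list \<Rightarrow> nat list set" where
  "edge_at = (\<lambda>(i, y). {y, y[i := Suc (y ! i)]})"

definition edge_index :: "nat list \<Rightarrow> (nat \<times> nat list) set" where
  "edge_index ns = (SIGMA i:{..<length ns}. grid_verts (ns[i := ns ! i - 1]))"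

lemma mem_edge_index_iff:
  "(i, y) \<in> edge_index ns \<longleftrightarrow> i < length ns \<and> y \<in> grid_verts ns \<and> Suc (y ! i) \<le> ns ! i"
proof (cases "i < length ns")
  case True
  have "y \<in> grid_verts (ns[i := ns ! i - 1]) \<longleftrightarrow> y \<in> grid_verts ns \<and> Suc (y ! i) \<le> ns ! i"
  proof
    assume y: "y \<in> grid_verts (ns[i := ns ! i - 1])"
    have "y \<in> grid_verts ns"
    proof (rule grid_vertsI)
      show "length y = length ns" using grid_verts_length[OF y] by simp
      show "1 \<le> y ! j \<and> y ! j \<le> ns ! j" if "j < length ns" for j
        using grid_verts_nth[OF y, of j] that True by (cases "j = i") auto
    qed
    moreover have "Suc (y ! i) \<le> ns ! i" using grid_verts_nth[OF y, of i] True by (simp, linarith)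
    ultimately show "y \<in> grid_verts ns \<and> Suc (y ! i) \<le> ns ! i" ..
  next
    assume y: "y \<in> grid_verts ns \<and> Suc (y ! i) \<le> ns ! i"
    show "y \<in> grid_verts (ns[i := ns ! i - 1])"
    proof (rule grid_vertsI)
      show "length y = length (ns[i := ns ! i - 1])" using y grid_verts_length by simp
      show "1 \<le> y ! j \<and> y ! j \<le> ns[i := ns ! i - 1] ! j" if "j < length (ns[i := ns ! i - 1])" for j
        using grid_verts_nth[of y ns j] y that by (cases "j = i") auto
    qed
  qed
  with True show ?thesis by (simp add: edge_index_def)
qed (simp add: edge_index_def)

lemma edge_at_in_grid_edges:
  assumes "(i, y) \<in> edge_index ns"
  shows "edge_at (i, y) \<in> grid_edges ns"
proof -
  have i: "i < length ns" and y: "y \<in> grid_verts ns" and s: "Suc (y ! i) \<le> ns ! i"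
    using assms by (auto simp: mem_edge_index_iff)
  have "y[i := Suc (y ! i)] \<in> grid_verts ns"
    using y s i by (auto simp: grid_verts_def nth_list_update)
  moreover have "adjacent (length ns) y (y[i := Suc (y ! i)])"
    unfolding adjacent_def using i y by (intro exI[of _ i]) (simp add: grid_verts_length)
  ultimately show ?thesis using doubleton_in_grid_edges_iff y by (simp add: edge_at_def)
qed

lemma inj_on_edge_at: "inj_on edge_at (edge_index ns)"
proof (rule inj_onI, clarify)
  fix i y i' y' assume p: "(i, y) \<in> edge_index ns" "(i', y') \<in> edge_index ns"
    and e: "edge_at (i, y) = edge_at (i', y')"
  have l: "length y = length ns" "length y' = length ns" "i < length ns" "i' < length ns"
    using p by (auto simp: mem_edge_index_iff grid_verts_length)
  have e2: "{y, y[i := Suc (y ! i)]} = {y', y'[i' := Suc (y' ! i')]}"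
    using e by (simp add: edge_at_def)
  show "i = i' \<and> y = y'"
  proof (cases "y = y'")
    case True
    then have "y[i := Suc (y ! i)] = y[i' := Suc (y ! i')]" using e2 by (metis doubleton_eq_iff)
    then have "i = i'" using l True
      by (metis lessI n_not_Suc_n nth_list_update_eq nth_list_update_neq)
    then show ?thesis using True by simp
  next
    case False
    then have a: "y = y'[i' := Suc (y' ! i')]" "y' = y[i := Suc (y ! i)]"
      using e2 by (metis doubleton_eq_iff)+
    have "y ! i' = Suc (y' ! i')" using l by (subst a(1)) simp
    moreover have "y' ! i = Suc (y ! i)" using l by (subst a(2)) simp
    moreover have "i \<noteq> i' \<Longrightarrow> y ! i = y' ! i" using l by (subst a(1)) simp
    ultimately show ?thesis by (cases "i = i'") auto
  qed
qed

lemma bij_betw_edge_at: "bij_betw edge_at (edge_index ns) (grid_edges ns)"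
proof -
  have "grid_edges ns \<subseteq> edge_at ` edge_index ns"
  proof
    fix e assume "e \<in> grid_edges ns"
    then obtain x y where xy: "e = {x, y}" "x \<in> grid_verts ns" "y \<in> grid_verts ns" "adjacent (length ns) x y"
      by (rule grid_edgesE)
    obtain i where i: "i < length ns" "\<And>j. j < length ns \<Longrightarrow> j \<noteq> i \<Longrightarrow> x ! j = y ! j"
      "x ! i = Suc (y ! i) \<or> y ! i = Suc (x ! i)" using xy(4) unfolding adjacent_def by blast
    have len: "length x = length ns" "length y = length ns" using xy grid_verts_length by auto
    have upd: "u = v[i := Suc (v ! i)]" if "u ! i = Suc (v ! i)" "length u = length ns" "length v = length ns"
      "\<And>j. j < length ns \<Longrightarrow> j \<noteq> i \<Longrightarrow> u ! j = v ! j" for u v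
      using that i(1) by (intro nth_equalityI) (auto simp: nth_list_update)
    show "e \<in> edge_at ` edge_index ns"
    proof (cases "x ! i = Suc (y ! i)")
      case True
      then have "(i, y) \<in> edge_index ns" "e = edge_at (i, y)"
        using upd[of x y] xy i len grid_verts_nth[OF xy(2) i(1)] by (auto simp: mem_edge_index_iff edge_at_def)
      then show ?thesis by blast
    next
      case False
      then have "(i, x) \<in> edge_index ns" "e = edge_at (i, x)"
        using upd[of y x] xy i len grid_verts_nth[OF xy(3) i(1)] by (auto simp: mem_edge_index_iff edge_at_def)
      then show ?thesis by blast
    qed
  qed
  then show ?thesis using inj_on_edge_at edge_at_in_grid_edges
    by (auto simp: bij_betw_def)
qed

lemma grid_edges_edge_atE:
  assumes "e \<in> grid_edges ns"
  obtains i y where "(i, y) \<in> edge_index ns" "e = edge_at (i, y)"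
proof -
  have "e \<in> edge_at ` edge_index ns"
    using assms bij_betw_edge_at[of ns] by (simp add: bij_betw_def)
  then obtain p where "p \<in> edge_index ns" "e = edge_at p" by blast
  with that show ?thesis by (cases p) auto
qed

definition cube_face :: "nat list \<Rightarrow> nat \<Rightarrow> nat list set" where
  "cube_face a i = {y \<in> unit_cube a. y ! i = a ! i}"

lemma card_unit_cube: "card (unit_cube a) = 2 ^ length a"
  using bij_betw_same_card[OF bij_betw_cube_shift[of a]] by (simp add: card_grid_verts)

lemma finite_unit_cube: "finite (unit_cube a)"
  using card_unit_cube by (metis card.infinite power_not_zero zero_neq_numeral)

lemma card_cube_face:
  assumes "i < length a"
  shows "card (cube_face a i) = 2 ^ (length a - 1)"
proof -
  have face: "cube_face a i \<subseteq> unit_cube a" by (auto simp: cube_face_def)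
  have "unit_cube a = cube_face a i \<union> toggle a i ` cube_face a i"
  proof (intro equalityI subsetI)
    fix y assume y: "y \<in> unit_cube a"
    show "y \<in> cube_face a i \<union> toggle a i ` cube_face a i"
    proof (cases "y ! i = a ! i")
      case False
      then have "toggle a i y ! i = a ! i"
        using assms unit_cube_length[OF y] by (simp add: toggle_def)
      then have "toggle a i y \<in> cube_face a i"
        using toggle_in_unit_cube[OF y assms] by (simp add: cube_face_def)
      moreover have "y = toggle a i (toggle a i y)" using toggle_toggle[OF y assms] by simp
      ultimately show ?thesis by blast
    qed (use y in \<open>auto simp: cube_face_def\<close>)
  qed (use face toggle_in_unit_cube assms in auto)
  moreover have "cube_face a i \<inter> toggle a i ` cube_face a i = {}"
    using assms by (auto simp: cube_face_def toggle_def unit_cube_length)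
  moreover have "inj_on (toggle a i) (cube_face a i)"
    using toggle_toggle face assms by (metis inj_on_inverseI subsetD)
  ultimately have "card (unit_cube a) = 2 * card (cube_face a i)"
    using finite_subset[OF face finite_unit_cube] by (simp add: card_Un_disjoint card_image)
  then show ?thesis using assms card_unit_cube by (cases "length a") auto
qed

lemma cube_faces_subset_edge_index:
  assumes "cube_base ns a"
  shows "(SIGMA i:{..<length ns}. cube_face a i) \<subseteq> edge_index ns"
  using assms unit_cube_subset_grid[OF assms]
  by (auto simp: mem_edge_index_iff cube_face_def cube_base_def)

lemma unit_cube_edges_eq:
  assumes base: "cube_base ns a"
  shows "unit_cube_edges ns a = edge_at ` (SIGMA i:{..<length ns}. cube_face a i)"
proof (intro equalityI subsetI)
  have la: "length a = length ns" using base by (simp add: cube_base_def)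
  fix e assume e: "e \<in> unit_cube_edges ns a"
  then obtain i y where p: "(i, y) \<in> edge_index ns" "e = edge_at (i, y)"
    by (auto simp: unit_cube_edges_def elim: grid_edges_edge_atE)
  have i: "i < length ns" and "length y = length ns"
    using p(1) by (auto simp: mem_edge_index_iff grid_verts_length)
  have "y \<in> unit_cube a" "y[i := Suc (y ! i)] \<in> unit_cube a"
    using e p by (auto simp: unit_cube_edges_def edge_at_def)
  then have "y ! i = a ! i"
    using unit_cube_nth[of y a i] unit_cube_nth[of "y[i := Suc (y ! i)]" a i] i la \<open>length y = length ns\<close>
    by auto
  with \<open>y \<in> unit_cube a\<close> i p(2) show "e \<in> edge_at ` (SIGMA i:{..<length ns}. cube_face a i)"
    by (auto simp: cube_face_def)
next
  have la: "length a = length ns" using base by (simp add: cube_base_def)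
  fix e assume "e \<in> edge_at ` (SIGMA i:{..<length ns}. cube_face a i)"
  then obtain i y where iy: "i < length ns" "y \<in> cube_face a i" "e = edge_at (i, y)" by blast
  then have "e \<in> grid_edges ns"
    using edge_at_in_grid_edges cube_faces_subset_edge_index[OF base] by blast
  moreover have "y[i := Suc (y ! i)] \<in> unit_cube a"
    using iy la by (auto simp: cube_face_def unit_cube_def nth_list_update)
  ultimately show "e \<in> unit_cube_edges ns a"
    using iy by (auto simp: unit_cube_edges_def edge_at_def cube_face_def)
qed

lemma grid_edge_in_unit_cube:
  assumes n: "\<forall>i<length ns. 2 \<le> ns ! i" and e: "e \<in> grid_edges ns"
  obtains a where "cube_base ns a" "e \<in> unit_cube_edges ns a"
proof -
  obtain i y where p: "(i, y) \<in> edge_index ns" "e = edge_at (i, y)"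
    using e by (rule grid_edges_edge_atE)
  have i: "i < length ns" and y: "y \<in> grid_verts ns" and s: "Suc (y ! i) \<le> ns ! i"
    using p(1) by (auto simp: mem_edge_index_iff)
  define a where "a = map (\<lambda>j. if j = i then y ! i else min (y ! j) (ns ! j - 1)) [0..<length ns]"
  have "1 \<le> a ! j \<and> Suc (a ! j) \<le> ns ! j" if "j < length ns" for j
    using grid_verts_nth[OF y that] n that s by (auto simp: a_def)
  then have base: "cube_base ns a" by (simp add: cube_base_def a_def)
  have "y ! j = a ! j \<or> y ! j = Suc (a ! j)" if "j < length ns" for j
    using grid_verts_nth[OF y that] that by (auto simp: a_def)
  then have "y \<in> cube_face a i"
    using grid_verts_length[OF y] i by (auto simp: cube_face_def unit_cube_def a_def)
  then have "e \<in> unit_cube_edges ns a"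
    using unit_cube_edges_eq[OF base] p(2) i by blast
  with base that show ?thesis by blast
qed

section \<open>Edge labellings\<close>

lemma bij_betw_concat_blocks:
  fixes g :: "nat \<Rightarrow> 'a \<Rightarrow> nat" and M :: "nat \<Rightarrow> nat"
  assumes bij: "\<And>i. i < d \<Longrightarrow> bij_betw (g i) (A i) {1..M i}"
  shows "bij_betw (\<lambda>(i, y). (\<Sum>j<i. M j) + g i y) (SIGMA i:{..<d}. A i) {1..\<Sum>j<d. M j}"
proof -
  let ?f = "\<lambda>(i, y). (\<Sum>j<i. M j) + g i y"
  have range: "1 \<le> g i y \<and> g i y \<le> M i" if "i < d" "y \<in> A i" for i y
    using bij_betwE[OF bij[OF that(1)]] that(2) by auto
  have below: "?f (i, y) \<le> (\<Sum>j<i'. M j)" if "i < i'" "i < d" "y \<in> A i" for i i' y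
  proof -
    have "?f (i, y) \<le> (\<Sum>j<Suc i. M j)" using range[OF that(2,3)] by simp
    also have "\<dots> \<le> (\<Sum>j<i'. M j)" using that(1) by (intro sum_mono2) auto
    finally show ?thesis .
  qed
  have "inj_on ?f (SIGMA i:{..<d}. A i)"
  proof (rule inj_onI)
    fix u u' assume "u \<in> (SIGMA i:{..<d}. A i)" "u' \<in> (SIGMA i:{..<d}. A i)" "?f u = ?f u'"
    then obtain i y i' y' where u: "u = (i, y)" "u' = (i', y')"
      and p: "i < d" "y \<in> A i" "i' < d" "y' \<in> A i'" and e: "?f (i, y) = ?f (i', y')"
      by (cases u, cases u') auto
    have above: "(\<Sum>j<k. M j) < ?f (k, z)" if "k < d" "z \<in> A k" for k z
      using range[OF that] by simp
    have "i = i'"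
    proof (rule linorder_cases[of i i'])
      assume "i < i'"
      then show ?thesis using below[OF _ p(1,2)] above[OF p(3,4)] e by fastforce
    next
      assume "i' < i"
      then show ?thesis using below[OF _ p(3,4)] above[OF p(1,2)] e by fastforce
    qed
    then have "g i y = g i y'" using e by simp
    then show "u = u'"
      using bij_betw_imp_inj_on[OF bij[OF p(1)]] p u \<open>i = i'\<close> by (auto dest: inj_onD)
  qed
  moreover have "?f ` (SIGMA i:{..<d}. A i) \<subseteq> {1..\<Sum>j<d. M j}"
    using range below[of _ d] by fastforce
  moreover have "finite (A i)" if "i < d" for i using bij_betw_finite[OF bij[OF that]] by simp
  then have "card (SIGMA i:{..<d}. A i) = card {1..\<Sum>j<d. M j}"
    using bij_betw_same_card[OF bij] by (simp add: card_SigmaI)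
  ultimately show ?thesis by (intro bij_betw_if_inj_on_card) auto
qed

text \<open>For at least three dimensions the edges in direction \<open>i\<close> are the vertices of the grid
  shortened by one in direction \<open>i\<close>; they form the \<open>i\<close>-th block of labels, ordered by a
  balanced labelling along two directions other than \<open>i\<close>.\<close>
definition block_label :: "nat list \<Rightarrow> nat \<times> nat list \<Rightarrow> nat" where
  "block_label ns = (\<lambda>(i, y). (\<Sum>j<i. prod_list (ns[j := ns ! j - 1])) +
     balanced_label (ns[i := ns ! i - 1]) (if i = 0 then 1 else 0) (if i \<le> 1 then 2 else 1) y)"

lemma bij_betw_block_label:
  assumes "3 \<le> length ns"
  shows "bij_betw (block_label ns) (edge_index ns) {1..card (edge_index ns)}"
proof -
  have "bij_betw (block_label ns) (edge_index ns) {1..\<Sum>j<length ns. prod_list (ns[j := ns ! j - 1])}"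
    unfolding block_label_def edge_index_def
    using assms by (intro bij_betw_concat_blocks bij_betw_balanced_label) auto
  moreover from this have "card (edge_index ns) = (\<Sum>j<length ns. prod_list (ns[j := ns ! j - 1]))"
    by (simp add: bij_betw_same_card)
  ultimately show ?thesis by simp
qed

lemma block_label_face_sum:
  assumes d: "3 \<le> length ns" and base: "cube_base ns a" and i: "i < length ns"
  shows "2 * (\<Sum>y\<in>cube_face a i. block_label ns (i, y)) =
    2 ^ (length ns - 1) * (2 * (\<Sum>j<i. prod_list (ns[j := ns ! j - 1])) + prod_list (ns[i := ns ! i - 1]) + 1)"
proof -
  define p q :: nat where "p = (if i = 0 then 1 else 0)" and "q = (if i \<le> 1 then 2 else 1)"
  define off M where "off = (\<Sum>j<i. prod_list (ns[j := ns ! j - 1]))" and "M = prod_list (ns[i := ns ! i - 1])"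
  have la: "length a = length ns" using base by (simp add: cube_base_def)
  have pq: "p \<noteq> q" "p < length ns" "q < length ns" "p \<noteq> i" "q \<noteq> i"
    using d by (auto simp: p_def q_def)
  have face: "cube_face a i \<subseteq> unit_cube a" by (auto simp: cube_face_def)
  have grid: "cube_face a i \<subseteq> grid_verts (ns[i := ns ! i - 1])"
    using cube_faces_subset_edge_index[OF base] i by (auto simp: edge_index_def)
  have toggle: "toggle a r ` cube_face a i \<subseteq> cube_face a i" if "r \<noteq> i" "r < length ns" for r
    using that la toggle_in_unit_cube by (auto simp: cube_face_def toggle_def)
  have "2 * (\<Sum>y\<in>cube_face a i. balanced_label (ns[i := ns ! i - 1]) p q y) =
      card (cube_face a i) * (M + 1)"
    unfolding M_def by (rule balanced_label_sum) (use pq face grid toggle[of p] toggle[of q] in auto)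
  moreover have "(\<Sum>y\<in>cube_face a i. block_label ns (i, y)) =
      card (cube_face a i) * off + (\<Sum>y\<in>cube_face a i. balanced_label (ns[i := ns ! i - 1]) p q y)"
    by (simp add: block_label_def sum.distrib off_def p_def q_def)
  moreover have "card (cube_face a i) = 2 ^ (length ns - 1)" using card_cube_face i la by simp
  ultimately show ?thesis by (simp add: algebra_simps off_def M_def)
qed

lemma grid_verts_pair: "y \<in> grid_verts [n1, n2] \<longleftrightarrow> (\<exists>y0 y1. y = [y0, y1] \<and> y0 \<in> {1..n1} \<and> y1 \<in> {1..n2})"
proof
  assume y: "y \<in> grid_verts [n1, n2]"
  then obtain y0 y1 where "y = [y0, y1]"
    using grid_verts_length[OF y] by (auto simp: numeral_2_eq_2 length_Suc_conv)
  with grid_verts_nth[OF y, of 0] grid_verts_nth[OF y, of 1]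
  show "\<exists>y0 y1. y = [y0, y1] \<and> y0 \<in> {1..n1} \<and> y1 \<in> {1..n2}" by auto
qed (auto simp: grid_verts_def less_Suc_eq)

lemma mem_edge_index_pair:
  "(i, y) \<in> edge_index [n1, n2] \<longleftrightarrow> (\<exists>y0 y1. y = [y0, y1] \<and> y0 \<in> {1..n1} \<and> y1 \<in> {1..n2} \<and>
     (i = 0 \<and> y0 < n1 \<or> i = 1 \<and> y1 < n2))"
proof (cases "i = 0 \<or> i = 1")
  case True
  then show ?thesis by (elim disjE) (auto simp: mem_edge_index_iff grid_verts_pair)
qed (auto simp: mem_edge_index_iff)

text \<open>In two dimensions a unit square has only two edges per direction, too few for a balanced
  labelling. Instead the edges are labelled in layers of \<open>2 n1 - 1\<close>: layer \<open>q\<close> holds the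
  horizontal edges of row \<open>q + 1\<close> from left to right, then the vertical edges between rows
  \<open>n2 - q - 1\<close> and \<open>n2 - q\<close> from right to left. The horizontal edges of a unit square sit at
  equal positions of consecutive layers and its vertical edges at adjacent positions of one layer,
  so the position of the square cancels from the sum of its labels.\<close>
definition square_label :: "nat \<Rightarrow> nat \<Rightarrow> nat \<times> nat list \<Rightarrow> nat" where
  "square_label n1 n2 = (\<lambda>(i, y). if i = 0 then (2 * n1 - 1) * (y ! 1 - 1) + y ! 0
     else (2 * n1 - 1) * (n2 - y ! 1 - 1) + (2 * n1 - y ! 0))"

lemma card_edge_index_pair: "card (edge_index [n1, n2]) = (n1 - 1) * n2 + n1 * (n2 - 1)"
proof -
  have "card (edge_index [n1, n2]) =
      (\<Sum>i<length [n1, n2]. card (grid_verts ([n1, n2][i := [n1, n2] ! i - 1])))"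
    unfolding edge_index_def by (rule card_SigmaI) (auto simp: finite_grid_verts)
  also have "\<dots> = card (grid_verts [n1 - 1, n2]) + card (grid_verts [n1, n2 - 1])"
    by (simp add: numeral_2_eq_2)
  finally show ?thesis by (simp add: card_grid_verts)
qed

lemma bij_betw_square_label:
  assumes "2 \<le> n1" "2 \<le> n2"
  shows "bij_betw (square_label n1 n2) (edge_index [n1, n2]) {1..card (edge_index [n1, n2])}"
proof (rule bij_betw_if_inj_on_card)
  define A where "A = 2 * n1 - 1"
  define q :: "nat \<times> nat list \<Rightarrow> nat" where "q = (\<lambda>(i, y). if i = 0 then y ! 1 - 1 else n2 - y ! 1 - 1)"
  define r :: "nat \<times> nat list \<Rightarrow> nat" where "r = (\<lambda>(i, y). if i = 0 then y ! 0 else 2 * n1 - y ! 0)"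
  have label: "square_label n1 n2 p = A * q p + r p" for p
    by (simp add: square_label_def A_def q_def r_def split: prod.splits)
  have r: "r (i, y) \<in> {1..A} \<and> (i = 0 \<longleftrightarrow> r (i, y) < n1)" if "(i, y) \<in> edge_index [n1, n2]" for i y
    using that assms by (auto simp: mem_edge_index_pair r_def A_def)
  show "inj_on (square_label n1 n2) (edge_index [n1, n2])"
  proof (rule inj_onI)
    fix p p' assume p: "p \<in> edge_index [n1, n2]" and p': "p' \<in> edge_index [n1, n2]"
      and "square_label n1 n2 p = square_label n1 n2 p'"
    then obtain i y i' y' where ii: "p = (i, y)" "p' = (i', y')" by (cases p, cases p') auto
    have "q p = q p' \<and> r p = r p'"
      using mult_add_digit_inject[of "r p" A "r p'" "q p" "q p'"] r p p' ii label
        \<open>square_label n1 n2 p = square_label n1 n2 p'\<close> by (simp add: mult.commute)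
    moreover have "i < 2" "i' < 2" using p p' ii by (auto simp: mem_edge_index_iff)
    ultimately have "i = i'" "q (i, y) = q (i', y')" "r (i, y) = r (i', y')"
      using r[of i y] r[of i' y'] p p' ii by auto
    then show "p = p'" using p p' ii assms by (auto simp: mem_edge_index_pair q_def r_def)
  qed
  have card: "card (edge_index [n1, n2]) = A * (n2 - 1) + (n1 - 1)"
  proof -
    obtain m1 m2 where "n1 = Suc m1" "n2 = Suc m2" using assms by (metis Suc_le_D numeral_2_eq_2)
    then show ?thesis by (simp add: card_edge_index_pair A_def algebra_simps)
  qed
  show "square_label n1 n2 ` edge_index [n1, n2] \<subseteq> {1..card (edge_index [n1, n2])}"
  proof clarify
    fix i y assume p: "(i, y) \<in> edge_index [n1, n2]"
    have "A * q (i, y) + r (i, y) \<le> A * (n2 - 1) + (n1 - 1)"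
    proof (cases "i = 0")
      case True
      then have "q (i, y) \<le> n2 - 1" "r (i, y) \<le> n1 - 1" using p by (auto simp: mem_edge_index_pair q_def r_def)
      then show ?thesis by (intro add_mono mult_le_mono2)
    next
      case False
      then have "q (i, y) + 1 \<le> n2 - 1" using p by (auto simp: mem_edge_index_pair q_def)
      then have "A * (q (i, y) + 1) \<le> A * (n2 - 1)" by (rule mult_le_mono2)
      then show ?thesis using r[OF p] by simp
    qed
    then show "square_label n1 n2 (i, y) \<in> {1..card (edge_index [n1, n2])}"
      using r[OF p] label[of "(i, y)"] card by simp
  qed
qed simp_all

lemma unit_cube_pair: "y \<in> unit_cube [a0, a1] \<longleftrightarrow> (\<exists>y0 y1. y = [y0, y1] \<and> y0 \<in> {a0, Suc a0} \<and> y1 \<in> {a1, Suc a1})"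
proof
  assume y: "y \<in> unit_cube [a0, a1]"
  then obtain y0 y1 where "y = [y0, y1]"
    using unit_cube_length[OF y] by (auto simp: numeral_2_eq_2 length_Suc_conv)
  with unit_cube_nth[OF y, of 0] unit_cube_nth[OF y, of 1]
  show "\<exists>y0 y1. y = [y0, y1] \<and> y0 \<in> {a0, Suc a0} \<and> y1 \<in> {a1, Suc a1}" by auto
qed (auto simp: unit_cube_def less_Suc_eq)

lemma square_label_face_sum:
  assumes "cube_base [n1, n2] a"
  shows "(\<Sum>y\<in>cube_face a 0. square_label n1 n2 (0, y)) + (\<Sum>y\<in>cube_face a 1. square_label n1 n2 (1, y)) =
    (2 * n1 - 1) * (2 * n2 - 3) + 4 * n1 - 1"
proof -
  obtain a0 a1 where a: "a = [a0, a1]"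
    using assms by (auto simp: cube_base_def numeral_2_eq_2 length_Suc_conv)
  have faces: "cube_face a 0 = {[a0, a1], [a0, Suc a1]}" "cube_face a 1 = {[a0, a1], [Suc a0, a1]}"
    by (auto simp: cube_face_def unit_cube_pair a)
  have "1 \<le> a1" "Suc a1 \<le> n2" "Suc a0 \<le> n1"
    using assms a by (auto simp: cube_base_def less_2_cases_iff)
  moreover define c e f where "c = a1 - 1" and "e = n2 - Suc a1" and "f = n1 - Suc a0"
  ultimately have cef: "a1 = Suc c" "n2 = Suc (Suc c) + e" "n1 = Suc a0 + f"
    by simp_all
  show ?thesis
    unfolding faces by (simp add: square_label_def cef algebra_simps)
qed

section \<open>The supermagic labelling\<close>

definition edge_index_label :: "nat list \<Rightarrow> nat \<times> nat list \<Rightarrow> nat" where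
  "edge_index_label ns = (if length ns = 2 then square_label (ns ! 0) (ns ! 1) else block_label ns)"

definition cube_magic_labelling :: "nat list \<Rightarrow> nat list + nat list set \<Rightarrow> nat" where
  "cube_magic_labelling ns = case_sum (balanced_label ns 0 1)
     (\<lambda>e. prod_list ns + edge_index_label ns (the_inv_into (edge_index ns) edge_at e))"

lemma list_of_length_2: "length ns = 2 \<Longrightarrow> ns = [ns ! 0, ns ! 1]"
  by (auto simp: numeral_2_eq_2 length_Suc_conv)

lemma bij_betw_edge_index_label:
  assumes "2 \<le> length ns" "\<forall>i<length ns. 2 \<le> ns ! i"
  shows "bij_betw (edge_index_label ns) (edge_index ns) {1..card (edge_index ns)}"
proof (cases "length ns = 2")
  case True
  then have "2 \<le> ns ! 0" "2 \<le> ns ! 1" using assms(2) by auto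
  with bij_betw_square_label[OF this] list_of_length_2[OF True] True show ?thesis
    by (simp add: edge_index_label_def)
next
  case False
  with assms(1) show ?thesis using bij_betw_block_label by (simp add: edge_index_label_def)
qed

lemma bij_betw_cube_magic_labelling:
  assumes "2 \<le> length ns" "\<forall>i<length ns. 2 \<le> ns ! i"
  shows "bij_betw (cube_magic_labelling ns) (Inl ` grid_verts ns \<union> Inr ` grid_edges ns)
    {1..card (grid_verts ns) + card (grid_edges ns)}"
proof -
  let ?N = "card (grid_verts ns)" and ?M = "card (grid_edges ns)"
  let ?L = "\<lambda>e. edge_index_label ns (the_inv_into (edge_index ns) edge_at e)"
  have N: "?N = prod_list ns" by (rule card_grid_verts)
  have "0 < length ns" "1 < length ns" using assms(1) by auto
  then have "bij_betw (balanced_label ns 0 1) (grid_verts ns) {1..?N}"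
    using bij_betw_balanced_label[of 0 1 ns] N by simp
  then have vertices: "bij_betw (cube_magic_labelling ns) (Inl ` grid_verts ns) {1..?N}"
    by (simp add: cube_magic_labelling_def bij_betw_def inj_on_def image_image)
  have L: "bij_betw ?L (grid_edges ns) {1..?M}"
    using bij_betw_trans[OF bij_betw_the_inv_into[OF bij_betw_edge_at] bij_betw_edge_index_label[OF assms]]
      bij_betw_same_card[OF bij_betw_edge_at[of ns]] by (simp add: comp_def)
  have "(\<lambda>e. ?N + ?L e) ` grid_edges ns = plus ?N ` (?L ` grid_edges ns)" by (simp add: image_image)
  also have "\<dots> = {?N + 1..?N + ?M}" using L by (simp add: bij_betw_def add.commute)
  finally have "bij_betw (\<lambda>e. ?N + ?L e) (grid_edges ns) {?N + 1..?N + ?M}"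
    using L by (simp add: bij_betw_def inj_on_def)
  then have edges: "bij_betw (cube_magic_labelling ns) (Inr ` grid_edges ns) {?N + 1..?N + ?M}"
    by (simp add: cube_magic_labelling_def bij_betw_def inj_on_def image_image N)
  have "{1..?N} \<union> {?N + 1..?N + ?M} = {1..?N + ?M}" by auto
  then show ?thesis using bij_betw_combine[OF vertices edges] by auto
qed

lemma cube_vertex_label_sum:
  assumes "2 \<le> length ns" "cube_base ns a"
  shows "2 * (\<Sum>v\<in>unit_cube a. cube_magic_labelling ns (Inl v)) = 2 ^ length ns * (prod_list ns + 1)"
proof -
  have la: "length a = length ns" using assms(2) by (simp add: cube_base_def)
  have "0 < length ns" "1 < length ns" using assms(1) by auto
  then have "2 * (\<Sum>v\<in>unit_cube a. balanced_label ns 0 1 v) = card (unit_cube a) * (prod_list ns + 1)"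
    using la unit_cube_subset_grid[OF assms(2)] toggle_in_unit_cube[of _ a 0] toggle_in_unit_cube[of _ a 1]
    by (intro balanced_label_sum) auto
  then show ?thesis using card_unit_cube la by (simp add: cube_magic_labelling_def)
qed

lemma cube_edge_label_sum:
  assumes base: "cube_base ns a"
  shows "(\<Sum>e\<in>unit_cube_edges ns a. cube_magic_labelling ns (Inr e)) =
    (\<Sum>i<length ns. \<Sum>y\<in>cube_face a i. prod_list ns + edge_index_label ns (i, y))"
proof -
  let ?F = "SIGMA i:{..<length ns}. cube_face a i"
  have sub: "?F \<subseteq> edge_index ns" by (rule cube_faces_subset_edge_index[OF base])
  have inj: "inj_on edge_at (edge_index ns)" by (rule inj_on_edge_at)
  have "(\<Sum>e\<in>unit_cube_edges ns a. cube_magic_labelling ns (Inr e)) =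
      (\<Sum>p\<in>?F. cube_magic_labelling ns (Inr (edge_at p)))"
    unfolding unit_cube_edges_eq[OF base] by (rule sum.reindex[OF inj_on_subset[OF inj sub], unfolded comp_def])
  also have "\<dots> = (\<Sum>p\<in>?F. prod_list ns + edge_index_label ns p)"
    using sub by (intro sum.cong) (auto simp: cube_magic_labelling_def the_inv_into_f_f[OF inj])
  also have "\<dots> = (\<Sum>i<length ns. \<Sum>y\<in>cube_face a i. prod_list ns + edge_index_label ns (i, y))"
  proof -
    have "\<forall>i\<in>{..<length ns}. finite (cube_face a i)"
      using finite_unit_cube by (simp add: cube_face_def)
    then show ?thesis
      using sum.Sigma[of "{..<length ns}" "cube_face a" "\<lambda>i y. prod_list ns + edge_index_label ns (i, y)"]
      by (simp add: split_def)
  qed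
  finally show ?thesis .
qed

lemma edge_index_label_face_sum_const:
  assumes "2 \<le> length ns"
  obtains K where "\<And>a. cube_base ns a \<Longrightarrow> (\<Sum>i<length ns. \<Sum>y\<in>cube_face a i. edge_index_label ns (i, y)) = K"
proof (cases "length ns = 2")
  case True
  have "(\<Sum>i<length ns. \<Sum>y\<in>cube_face a i. edge_index_label ns (i, y)) =
      (2 * ns ! 0 - 1) * (2 * ns ! 1 - 3) + 4 * ns ! 0 - 1" if "cube_base ns a" for a
    using square_label_face_sum[of "ns ! 0" "ns ! 1" a] that list_of_length_2[OF True] True
    by (simp add: edge_index_label_def numeral_2_eq_2)
  with that show ?thesis by blast
next
  case False
  define K where "K = (\<Sum>i<length ns. 2 ^ (length ns - 1) *
      (2 * (\<Sum>j<i. prod_list (ns[j := ns ! j - 1])) + prod_list (ns[i := ns ! i - 1]) + 1)) div 2"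
  have "(\<Sum>i<length ns. \<Sum>y\<in>cube_face a i. edge_index_label ns (i, y)) = K" if "cube_base ns a" for a
  proof -
    have "2 * (\<Sum>i<length ns. \<Sum>y\<in>cube_face a i. edge_index_label ns (i, y)) =
        (\<Sum>i<length ns. 2 * (\<Sum>y\<in>cube_face a i. block_label ns (i, y)))"
      using False by (simp add: edge_index_label_def sum_distrib_left)
    also have "\<dots> = 2 * K + 0" unfolding K_def
      using block_label_face_sum[OF _ that] False assms
      by (subst dvd_mult_div_cancel) (auto intro!: dvd_sum sum.cong)
    finally show ?thesis by simp
  qed
  with that show ?thesis by blast
qed

lemma cube_label_sum_const:
  assumes "2 \<le> length ns"
  obtains c where "\<And>a. cube_base ns a \<Longrightarrow>
    (\<Sum>v\<in>unit_cube a. cube_magic_labelling ns (Inl v)) + (\<Sum>e\<in>unit_cube_edges ns a. cube_magic_labelling ns (Inr e)) = c"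
proof -
  let ?d = "length ns" and ?N = "prod_list ns"
  obtain K where K: "\<And>a. cube_base ns a \<Longrightarrow> (\<Sum>i<?d. \<Sum>y\<in>cube_face a i. edge_index_label ns (i, y)) = K"
    using edge_index_label_face_sum_const[OF assms] by blast
  have "(\<Sum>v\<in>unit_cube a. cube_magic_labelling ns (Inl v)) + (\<Sum>e\<in>unit_cube_edges ns a. cube_magic_labelling ns (Inr e)) =
      2 ^ ?d * (?N + 1) div 2 + (?d * (2 ^ (?d - 1) * ?N) + K)" if a: "cube_base ns a" for a
  proof -
    have la: "length a = ?d" using a by (simp add: cube_base_def)
    have "(\<Sum>v\<in>unit_cube a. cube_magic_labelling ns (Inl v)) = 2 ^ ?d * (?N + 1) div 2"
      using cube_vertex_label_sum[OF assms a] by simp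
    moreover have "(\<Sum>e\<in>unit_cube_edges ns a. cube_magic_labelling ns (Inr e)) = ?d * (2 ^ (?d - 1) * ?N) + K"
      using cube_edge_label_sum[OF a] K[OF a] card_cube_face la by (simp add: sum.distrib)
    ultimately show ?thesis by simp
  qed
  with that show ?thesis by blast
qed

lemma cube_magic_labelling_vertices:
  assumes "2 \<le> length ns"
  shows "cube_magic_labelling ns ` Inl ` grid_verts ns = {1..card (grid_verts ns)}"
proof -
  have "0 < length ns" "1 < length ns" using assms by auto
  then have "balanced_label ns 0 1 ` grid_verts ns = {1..prod_list ns}"
    using bij_betw_balanced_label[of 0 1 ns] by (simp add: bij_betw_def)
  then show ?thesis by (simp add: image_image cube_magic_labelling_def card_grid_verts)
qed

theorem corollary2:
  fixes ns :: "nat list"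
  assumes "length ns \<ge> 2"
    and "\<forall>i j. i \<le> j \<and> j < length ns \<longrightarrow> ns ! j \<le> ns ! i"
    and "\<forall>i<length ns. ns ! i \<ge> 2"
  shows "H_supermagic (grid ns) (cube (length ns))"
proof -
  let ?F = "cube_magic_labelling ns"
  have V: "verts (grid ns) = grid_verts ns" and E: "edges (grid ns) = grid_edges ns"
    by (simp_all add: grid_def verts_def edges_def)
  obtain c where c: "\<And>a. cube_base ns a \<Longrightarrow>
      (\<Sum>v\<in>unit_cube a. ?F (Inl v)) + (\<Sum>e\<in>unit_cube_edges ns a. ?F (Inr e)) = c"
    using cube_label_sum_const[OF assms(1)] by blast
  have "H_covering (grid ns) (cube (length ns))"
    unfolding H_covering_def E
    using grid_edge_in_unit_cube[OF assms(3)] unit_cube_in_copies by (metis edges_def snd_conv)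
  moreover have "\<forall>S\<in>copies (grid ns) (cube (length ns)).
      (\<Sum>v\<in>verts S. ?F (Inl v)) + (\<Sum>e\<in>edges S. ?F (Inr e)) = c"
    using copy_eq_unit_cube c by metis
  moreover have "bij_betw ?F (Inl ` verts (grid ns) \<union> Inr ` edges (grid ns))
      {1..card (verts (grid ns)) + card (edges (grid ns))}"
    unfolding V E by (rule bij_betw_cube_magic_labelling[OF assms(1,3)])
  moreover have "?F ` Inl ` verts (grid ns) = {1..card (verts (grid ns))}"
    unfolding V by (rule cube_magic_labelling_vertices[OF assms(1)])
  ultimately show ?thesis
    unfolding H_supermagic_def magic_labelling_def by blast
qed

end
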